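(* Let $L=[c,d]\subset\mathbb{R}$ with $c<d$ and $k\in\{0,1,2,\dots\}\cup\{\infty\}$. Then each of the classes $U_2(L,k)$, $U_3(L,k)$, $U_4(L,k)$, $U_5(L,k)$ is a dense $G_\delta$ subset of $C^k(L)$.
   Context: $C^k(L)$ is the space of $u:L\to\mathbb{C}$ that are $k$ times continuously differentiable on $[c,d]$, with seminorms $\sup_{x\in L}|u^{(l)}(x)|$, integers $0\le l\le k$. $D(z_0,r)$ is the open disk of center $z_0$ and radius $r$. For $z_0\in L$, $r>0$ let $\Omega(z_0,r)=D(z_0,r)\cap\{\operatorname{Im}z>0\}$, $P(z_0,r)=D(z_0,r)\cap\{\operatorname{Im}z<0\}$. $U_2(L,k)$: the $u\in C^k(L)$ for which there exist no $z_0\in L$, $r>0$ and continuous $\lambda:L\cup\Omega(z_0,r)\to\mathbb{C}$ holomorphic on $\Omega(z_0,r)$ with $\lambda=u$ on $D(z_0,r)\cap L$. $U_3(L,k)$: the same with $P(z_0,r)$ instead of $\Omega(z_0,r)$. $U_4(L,k)=U_2(L,k)\cap U_3(L,k)$. $U_5(L,k)$: the $u\in C^k(L)$ for which there exist no $z_0\in L$, $r>0$ and holomorphic $F:D(z_0,r)\to\mathbb{C}$ with $F=u$ on $D(z_0,r)\cap L$. *)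

theory Defs
  imports "HOL-Analysis.Analysis" "HOL-Library.Extended_Nat"
begin

text \<open>Functions on L = [c,d] are represented as maps real => complex that vanish
outside [c,d] (canonical representatives). D is a family of successive derivatives
(one-sided at the end points, i.e. derivatives within [c,d]); k :: enat, with
k = \<infinity> meaning C-infinity.\<close>

definition has_derivs :: "real \<Rightarrow> real \<Rightarrow> enat \<Rightarrow> (nat \<Rightarrow> real \<Rightarrow> complex) \<Rightarrow> bool" where
  "has_derivs c d k D \<longleftrightarrow>
     (\<forall>j. enat j \<le> k \<longrightarrow> continuous_on {c..d} (D j)) \<and>
     (\<forall>j x. enat j < k \<longrightarrow> x \<in> {c..d} \<longrightarrow>
        (D j has_vector_derivative D (Suc j) x) (at x within {c..d}))"

definition Ck :: "real \<Rightarrow> real \<Rightarrow> enat \<Rightarrow> (real \<Rightarrow> complex) set" where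
  "Ck c d k = {u. (\<forall>x. x \<notin> {c..d} \<longrightarrow> u x = 0) \<and> (\<exists>D. D 0 = u \<and> has_derivs c d k D)}"

text \<open>The j-th derivative of u on [c,d] (meaningful for j \<le> k).\<close>
definition Ck_deriv :: "real \<Rightarrow> real \<Rightarrow> enat \<Rightarrow> nat \<Rightarrow> (real \<Rightarrow> complex) \<Rightarrow> real \<Rightarrow> complex" where
  "Ck_deriv c d k j u = (SOME D. D 0 = u \<and> has_derivs c d k D) j"

definition Ck_seminorm :: "real \<Rightarrow> real \<Rightarrow> enat \<Rightarrow> nat \<Rightarrow> (real \<Rightarrow> complex) \<Rightarrow> real" where
  "Ck_seminorm c d k j u = (SUP x\<in>{c..d}. cmod (Ck_deriv c d k j u x))"

definition Ck_topology :: "real \<Rightarrow> real \<Rightarrow> enat \<Rightarrow> (real \<Rightarrow> complex) topology" where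
  "Ck_topology c d k = topology_generated_by
     {{v \<in> Ck c d k. Ck_seminorm c d k j (v - u) < e} | j u e. enat j \<le> k \<and> u \<in> Ck c d k \<and> e > 0}"

definition upper_half_disc :: "complex \<Rightarrow> real \<Rightarrow> complex set" where
  "upper_half_disc z0 r = ball z0 r \<inter> {z. Im z > 0}"

definition lower_half_disc :: "complex \<Rightarrow> real \<Rightarrow> complex set" where
  "lower_half_disc z0 r = ball z0 r \<inter> {z. Im z < 0}"

definition Lc :: "real \<Rightarrow> real \<Rightarrow> complex set" where
  "Lc c d = complex_of_real ` {c..d}"

definition U2 :: "real \<Rightarrow> real \<Rightarrow> enat \<Rightarrow> (real \<Rightarrow> complex) set" where
  "U2 c d k = {u \<in> Ck c d k. \<not> (\<exists>z0 r g. z0 \<in> Lc c d \<and> r > 0 \<and>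
      continuous_on (Lc c d \<union> upper_half_disc z0 r) g \<and>
      g holomorphic_on upper_half_disc z0 r \<and>
      (\<forall>x\<in>{c..d}. complex_of_real x \<in> ball z0 r \<longrightarrow> g (complex_of_real x) = u x))}"

definition U3 :: "real \<Rightarrow> real \<Rightarrow> enat \<Rightarrow> (real \<Rightarrow> complex) set" where
  "U3 c d k = {u \<in> Ck c d k. \<not> (\<exists>z0 r g. z0 \<in> Lc c d \<and> r > 0 \<and>
      continuous_on (Lc c d \<union> lower_half_disc z0 r) g \<and>
      g holomorphic_on lower_half_disc z0 r \<and>
      (\<forall>x\<in>{c..d}. complex_of_real x \<in> ball z0 r \<longrightarrow> g (complex_of_real x) = u x))}"

definition U4 :: "real \<Rightarrow> real \<Rightarrow> enat \<Rightarrow> (real \<Rightarrow> complex) set" where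
  "U4 c d k = U2 c d k \<inter> U3 c d k"

definition U5 :: "real \<Rightarrow> real \<Rightarrow> enat \<Rightarrow> (real \<Rightarrow> complex) set" where
  "U5 c d k = {u \<in> Ck c d k. \<not> (\<exists>z0 r F. z0 \<in> Lc c d \<and> r > 0 \<and>
      F holomorphic_on ball z0 r \<and>
      (\<forall>x\<in>{c..d}. complex_of_real x \<in> ball z0 r \<longrightarrow> F (complex_of_real x) = u x))}"

definition dense_gdelta :: "'a topology \<Rightarrow> 'a set \<Rightarrow> bool" where
  "dense_gdelta X S \<longleftrightarrow> gdelta_in X S \<and> X closure_of S = topspace X"

end

theory Submission
  imports Defs "HOL-Complex_Analysis.Complex_Analysis"
begin

text \<open>
  With the topology of its seminorms, C^k(L) is a complete metric space, so Baire's theorem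
  applies. If u is not in U2, then above some rational subinterval of L it extends
  holomorphically to a small rational half disc, with a bound by some integer M. For a fixed
  disc and M these functions form a closed set: by Montel's theorem and an estimate near the
  diameter obtained from Cauchy's formula on a triangle, bounded extensions of uniformly
  convergent functions converge to an extension of the limit. The set has empty interior:
  adding a small multiple of 1/(x - w), with w in the half disc, would give a bounded
  holomorphic function with a pole at w. So U2 is the complement of a countable union of
  closed nowhere dense sets. The same argument with full discs handles U5; U3 is the image
  of U2 under complex conjugation, and U4 = U2 \<inter> U3.
\<close>

section \<open>Successive derivatives on an interval\<close>

lemma has_derivs_unique:
  assumes "c < d" and D: "has_derivs c d k D" and E: "has_derivs c d k E"
    and eq0: "\<And>x. x \<in> {c..d} \<Longrightarrow> D 0 x = E 0 x"
  shows "enat j \<le> k \<Longrightarrow> x \<in> {c..d} \<Longrightarrow> D j x = E j x"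
proof (induction j arbitrary: x)
  case 0
  then show ?case using eq0 by blast
next
  case (Suc j)
  have "enat j < k"
    using Suc.prems(1) by (simp add: Suc_ile_eq)
  then have "(D j has_vector_derivative D (Suc j) x) (at x within {c..d})"
    and "(E j has_vector_derivative E (Suc j) x) (at x within {c..d})"
    using D E Suc.prems(2) unfolding has_derivs_def by blast+
  moreover have "(D j has_vector_derivative E (Suc j) x) (at x within {c..d})"
    by (rule has_vector_derivative_transform[OF Suc.prems(2) _ calculation(2)])
      (use Suc.IH \<open>enat j < k\<close> in \<open>simp add: order_less_imp_le\<close>)
  ultimately show ?case
    using vector_derivative_unique_within_closed_interval \<open>c < d\<close> Suc.prems(2) by fastforce
qed

lemma has_derivs_add:
  "has_derivs c d k D \<Longrightarrow> has_derivs c d k E \<Longrightarrow> has_derivs c d k (\<lambda>j x. D j x + E j x)"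
  unfolding has_derivs_def by (simp add: continuous_on_add has_vector_derivative_add)

lemma has_derivs_cmult:
  "has_derivs c d k D \<Longrightarrow> has_derivs c d k (\<lambda>j x. a * D j x)"
  unfolding has_derivs_def by (simp add: continuous_on_mult_left has_vector_derivative_mult_right)

lemma has_derivs_cnj:
  "has_derivs c d k D \<Longrightarrow> has_derivs c d k (\<lambda>j x. cnj (D j x))"
  unfolding has_derivs_def by (simp add: continuous_on_cnj has_vector_derivative_cnj)

lemma has_derivs_uniform_limit:
  assumes "c \<le> d" and D: "\<And>n. has_derivs c d k (D n)"
    and lim: "\<And>j. enat j \<le> k \<Longrightarrow> uniform_limit {c..d} (\<lambda>n. D n j) (F j) sequentially"
  shows "has_derivs c d k F"
  unfolding has_derivs_def
proof (intro conjI allI impI)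
  fix j assume "enat j \<le> k"
  show "continuous_on {c..d} (F j)"
    by (rule uniform_limit_theorem[OF _ lim[OF \<open>enat j \<le> k\<close>]])
      (use D \<open>enat j \<le> k\<close> in \<open>auto simp: has_derivs_def\<close>)
next
  fix j x assume "enat j < k" and x: "x \<in> {c..d}"
  then have j: "enat j \<le> k" and sj: "enat (Suc j) \<le> k"
    by (auto simp: Suc_ile_eq)
  have der: "((D n j) has_derivative (\<lambda>h. h *\<^sub>R D n (Suc j) y)) (at y within {c..d})"
    if "y \<in> {c..d}" for n y
    using D \<open>enat j < k\<close> that unfolding has_derivs_def has_vector_derivative_def by blast
  have close: "\<forall>\<^sub>F n in sequentially. \<forall>y\<in>{c..d}. \<forall>h.
      norm (h *\<^sub>R D n (Suc j) y - h *\<^sub>R F (Suc j) y) \<le> e * norm h" if "e > 0" for e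
    using uniform_limitD[OF lim[OF sj] \<open>e > 0\<close>]
  proof eventually_elim
    case (elim n)
    show ?case
    proof (intro ballI allI)
      fix y h assume "y \<in> {c..d}"
      then have "\<bar>h\<bar> * dist (D n (Suc j) y) (F (Suc j) y) \<le> \<bar>h\<bar> * e"
        using elim by (intro mult_left_mono) (auto simp: less_imp_le)
      then show "norm (h *\<^sub>R D n (Suc j) y - h *\<^sub>R F (Suc j) y) \<le> e * norm h"
        by (simp add: dist_norm mult.commute flip: scaleR_diff_right)
    qed
  qed
  have "c \<in> {c..d}" using \<open>c \<le> d\<close> by simp
  then obtain g where g: "\<And>y. y \<in> {c..d} \<Longrightarrow> (\<lambda>n. D n j y) \<longlonglongrightarrow> g y \<and>
      (g has_derivative (\<lambda>h. h *\<^sub>R F (Suc j) y)) (at y within {c..d})"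
    using has_derivative_sequence[OF convex_real_interval(5) der close _
        tendsto_uniform_limitI[OF lim[OF j]]] by metis
  have "g y = F j y" if "y \<in> {c..d}" for y
    using LIMSEQ_unique g[OF that] tendsto_uniform_limitI[OF lim[OF j] that] by blast
  then show "(F j has_vector_derivative F (Suc j) x) (at x within {c..d})"
    using g[OF x] has_vector_derivative_transform[OF x]
    unfolding has_vector_derivative_def by metis
qed

section \<open>The metric space C^k(L)\<close>

lemma ex_inverse_power_two_less: "0 < (e::real) \<Longrightarrow> \<exists>N. 1 / 2 ^ N < e"
  using real_arch_pow[of 2 "1 / e"] by (auto simp: field_simps)

lemma min_one_subadditive:
  fixes x y z :: real
  assumes "x \<le> y + z" "0 \<le> y" "0 \<le> z"
  shows "min 1 x \<le> min 1 y + min 1 z"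
  using assms by (auto simp: min_def)

locale Ck_space =
  fixes c d :: real and k :: enat
  assumes less: "c < d"
begin

abbreviation der :: "nat \<Rightarrow> (real \<Rightarrow> complex) \<Rightarrow> real \<Rightarrow> complex" where
  "der j u \<equiv> Ck_deriv c d k j u"

abbreviation snorm :: "nat \<Rightarrow> (real \<Rightarrow> complex) \<Rightarrow> real" where
  "snorm j u \<equiv> Ck_seminorm c d k j u"

lemma
  assumes "u \<in> Ck c d k"
  shows Ck_deriv_0: "der 0 u = u" and has_derivs_Ck_deriv: "has_derivs c d k (\<lambda>j. der j u)"
proof -
  have "\<exists>D. D 0 = u \<and> has_derivs c d k D"
    using assms unfolding Ck_def by auto
  then have "der 0 u = u \<and> has_derivs c d k (\<lambda>j. der j u)"
    unfolding Ck_deriv_def by (rule someI_ex)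
  then show "der 0 u = u" "has_derivs c d k (\<lambda>j. der j u)" by auto
qed

lemma Ck_deriv_eq:
  assumes "u \<in> Ck c d k" "D 0 = u" "has_derivs c d k D" "enat j \<le> k" "x \<in> {c..d}"
  shows "der j u x = D j x"
  using has_derivs_unique[OF less has_derivs_Ck_deriv[OF assms(1)] assms(3)] assms
    Ck_deriv_0[OF assms(1)] by auto

lemma Ck_vanishes: "u \<in> Ck c d k \<Longrightarrow> x \<notin> {c..d} \<Longrightarrow> u x = 0"
  unfolding Ck_def by auto

lemma continuous_on_Ck_deriv: "u \<in> Ck c d k \<Longrightarrow> enat j \<le> k \<Longrightarrow> continuous_on {c..d} (der j u)"
  using has_derivs_Ck_deriv unfolding has_derivs_def by auto

lemma continuous_on_Ck: "u \<in> Ck c d k \<Longrightarrow> continuous_on {c..d} u"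
  using continuous_on_Ck_deriv[of u 0] Ck_deriv_0[of u] by (simp add: zero_enat_def[symmetric])

lemma
  assumes "u \<in> Ck c d k" "v \<in> Ck c d k"
  shows Ck_lincomb: "(\<lambda>x. a * u x + b * v x) \<in> Ck c d k"
    and Ck_deriv_lincomb: "enat j \<le> k \<Longrightarrow> x \<in> {c..d} \<Longrightarrow>
      der j (\<lambda>x. a * u x + b * v x) x = a * der j u x + b * der j v x"
proof -
  define D where "D j x = a * der j u x + b * der j v x" for j x
  have D: "has_derivs c d k D"
    unfolding D_def by (intro has_derivs_add has_derivs_cmult has_derivs_Ck_deriv assms)
  have D0: "D 0 = (\<lambda>x. a * u x + b * v x)"
    using Ck_deriv_0[OF assms(1)] Ck_deriv_0[OF assms(2)] by (auto simp: D_def)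
  show uv: "(\<lambda>x. a * u x + b * v x) \<in> Ck c d k"
    unfolding Ck_def using D D0 Ck_vanishes[OF assms(1)] Ck_vanishes[OF assms(2)] by auto
  show "enat j \<le> k \<Longrightarrow> x \<in> {c..d} \<Longrightarrow> der j (\<lambda>x. a * u x + b * v x) x = a * der j u x + b * der j v x"
    using Ck_deriv_eq[OF uv D0 D] by (simp add: D_def)
qed

lemma
  assumes "u \<in> Ck c d k" "v \<in> Ck c d k"
  shows Ck_diff: "u - v \<in> Ck c d k"
    and Ck_deriv_diff: "enat j \<le> k \<Longrightarrow> x \<in> {c..d} \<Longrightarrow> der j (u - v) x = der j u x - der j v x"
proof -
  have uv: "u - v = (\<lambda>x. 1 * u x + (-1) * v x)" by (simp add: fun_eq_iff)
  show "u - v \<in> Ck c d k"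
    unfolding uv by (rule Ck_lincomb[OF assms])
  show "enat j \<le> k \<Longrightarrow> x \<in> {c..d} \<Longrightarrow> der j (u - v) x = der j u x - der j v x"
    unfolding uv using Ck_deriv_lincomb[OF assms, of _ _ 1 "-1"] by simp
qed

lemma
  assumes "u \<in> Ck c d k"
  shows Ck_cnj: "cnj \<circ> u \<in> Ck c d k"
    and Ck_deriv_cnj: "enat j \<le> k \<Longrightarrow> x \<in> {c..d} \<Longrightarrow> der j (cnj \<circ> u) x = cnj (der j u x)"
proof -
  define D where "D j x = cnj (der j u x)" for j x
  have D: "has_derivs c d k D"
    unfolding D_def by (intro has_derivs_cnj has_derivs_Ck_deriv assms)
  have D0: "D 0 = cnj \<circ> u"
    using Ck_deriv_0[OF assms] by (auto simp: D_def)
  show u': "cnj \<circ> u \<in> Ck c d k"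
    unfolding Ck_def using D D0 Ck_vanishes[OF assms] by auto
  show "enat j \<le> k \<Longrightarrow> x \<in> {c..d} \<Longrightarrow> der j (cnj \<circ> u) x = cnj (der j u x)"
    using Ck_deriv_eq[OF u' D0 D] by (simp add: D_def)
qed

lemma norm_Ck_deriv_le_snorm:
  assumes "u \<in> Ck c d k" "enat j \<le> k" "x \<in> {c..d}"
  shows "cmod (der j u x) \<le> snorm j u"
proof -
  have "compact ((\<lambda>x. cmod (der j u x)) ` {c..d})"
    by (intro compact_continuous_image continuous_on_norm continuous_on_Ck_deriv assms compact_Icc)
  then have "bdd_above ((\<lambda>x. cmod (der j u x)) ` {c..d})"
    by (simp add: bounded_imp_bdd_above compact_imp_bounded)
  then show ?thesis
    unfolding Ck_seminorm_def using assms(3) by (rule cSUP_upper2) simp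
qed

lemma snorm_le: "(\<And>x. x \<in> {c..d} \<Longrightarrow> cmod (der j u x) \<le> B) \<Longrightarrow> snorm j u \<le> B"
  unfolding Ck_seminorm_def using less by (auto intro!: cSUP_least)

lemma snorm_nonneg: "u \<in> Ck c d k \<Longrightarrow> enat j \<le> k \<Longrightarrow> 0 \<le> snorm j u"
  using norm_Ck_deriv_le_snorm[of u j c] less by (meson atLeastAtMost_iff norm_ge_zero order.trans order_refl less_imp_le)

lemma norm_Ck_deriv_diff_le_snorm:
  assumes "u \<in> Ck c d k" "v \<in> Ck c d k" "enat j \<le> k" "x \<in> {c..d}"
  shows "cmod (der j u x - der j v x) \<le> snorm j (u - v)"
  using norm_Ck_deriv_le_snorm[OF Ck_diff[OF assms(1,2)] assms(3,4)] Ck_deriv_diff[OF assms] by simp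

lemma snorm_diff_triangle:
  assumes "u \<in> Ck c d k" "v \<in> Ck c d k" "w \<in> Ck c d k" "enat j \<le> k"
  shows "snorm j (u - w) \<le> snorm j (u - v) + snorm j (v - w)"
proof (rule snorm_le)
  fix x assume x: "x \<in> {c..d}"
  have "cmod (der j (u - w) x) = cmod ((der j u x - der j v x) + (der j v x - der j w x))"
    using Ck_deriv_diff[OF assms(1,3,4) x] by simp
  also have "\<dots> \<le> snorm j (u - v) + snorm j (v - w)"
    using norm_Ck_deriv_diff_le_snorm[OF assms(1,2,4) x] norm_Ck_deriv_diff_le_snorm[OF assms(2,3,4) x]
    by (meson add_mono norm_triangle_ineq order_trans)
  finally show "cmod (der j (u - w) x) \<le> snorm j (u - v) + snorm j (v - w)" .
qed

lemma snorm_diff_commute: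
  assumes "u \<in> Ck c d k" "v \<in> Ck c d k" "enat j \<le> k"
  shows "snorm j (u - v) = snorm j (v - u)"
proof -
  have "cmod (der j (u - v) x) = cmod (der j (v - u) x)" if "x \<in> {c..d}" for x
    using Ck_deriv_diff[OF assms(1,2,3) that] Ck_deriv_diff[OF assms(2,1,3) that]
    by (simp add: norm_minus_commute)
  then show ?thesis unfolding Ck_seminorm_def by (auto intro: SUP_cong)
qed

lemma snorm_cnj:
  assumes "u \<in> Ck c d k" "enat j \<le> k"
  shows "snorm j (cnj \<circ> u) = snorm j u"
  unfolding Ck_seminorm_def using Ck_deriv_cnj[OF assms(1) assms(2)] by (auto intro: SUP_cong)

text \<open>The usual metric of a Fr\'echet space built from its seminorms, with a supremum in place
  of a series; the value 0 outside C^k(L) is junk.\<close>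

definition dist_term :: "nat \<Rightarrow> (real \<Rightarrow> complex) \<Rightarrow> (real \<Rightarrow> complex) \<Rightarrow> real" where
  "dist_term j u v = min 1 (snorm j (u - v)) / 2 ^ j"

definition Ck_dist :: "(real \<Rightarrow> complex) \<Rightarrow> (real \<Rightarrow> complex) \<Rightarrow> real" where
  "Ck_dist u v =
    (if u \<in> Ck c d k \<and> v \<in> Ck c d k then SUP j\<in>{j. enat j \<le> k}. dist_term j u v else 0)"

lemma dist_term_le_inverse_power: "dist_term j u v \<le> 1 / 2 ^ j"
  unfolding dist_term_def by (simp add: divide_right_mono)

lemma dist_term_le_snorm:
  assumes "u \<in> Ck c d k" "v \<in> Ck c d k" "enat j \<le> k"
  shows "dist_term j u v \<le> snorm j (u - v)"
proof -
  have halve: "a / 2 ^ j \<le> a" if "0 \<le> a" for a :: real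
    using mult_left_mono[of 1 "2 ^ j" a] that by (simp add: pos_divide_le_eq)
  have "0 \<le> min 1 (snorm j (u - v))"
    using snorm_nonneg[OF Ck_diff[OF assms(1,2)] assms(3)] by simp
  from halve[OF this] show ?thesis
    unfolding dist_term_def by linarith
qed

lemma dist_term_le_Ck_dist:
  assumes "u \<in> Ck c d k" "v \<in> Ck c d k" "enat j \<le> k"
  shows "dist_term j u v \<le> Ck_dist u v"
proof -
  have "dist_term i u v \<le> 1" for i
  proof -
    have "1 / 2 ^ i \<le> (1::real)" by simp
    then show ?thesis using dist_term_le_inverse_power[of i u v] by linarith
  qed
  then have "bdd_above ((\<lambda>i. dist_term i u v) ` {i. enat i \<le> k})"
    by (intro bdd_aboveI[of _ 1]) auto
  then have "dist_term j u v \<le> (SUP i\<in>{i. enat i \<le> k}. dist_term i u v)"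
    by (rule cSUP_upper[rotated]) (use assms(3) in simp)
  then show ?thesis
    unfolding Ck_dist_def using assms by simp
qed

lemma Ck_dist_le:
  assumes "u \<in> Ck c d k" "v \<in> Ck c d k" "\<And>j. enat j \<le> k \<Longrightarrow> dist_term j u v \<le> B"
  shows "Ck_dist u v \<le> B"
proof -
  have "{j. enat j \<le> k} \<noteq> {}"
    by (auto simp: zero_enat_def[symmetric] intro!: exI[of _ 0])
  then have "(SUP j\<in>{j. enat j \<le> k}. dist_term j u v) \<le> B"
    by (rule cSUP_least) (use assms(3) in simp)
  then show ?thesis
    unfolding Ck_dist_def using assms by simp
qed

lemma Ck_dist_le_snorm:
  assumes "u \<in> Ck c d k" "v \<in> Ck c d k" "1 / 2 ^ N \<le> e"
    and "\<And>j. enat j \<le> k \<Longrightarrow> j \<le> N \<Longrightarrow> snorm j (u - v) \<le> e"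
  shows "Ck_dist u v \<le> e"
proof (rule Ck_dist_le[OF assms(1,2)])
  fix j assume j: "enat j \<le> k"
  show "dist_term j u v \<le> e"
  proof (cases "j \<le> N")
    case True
    then show ?thesis using dist_term_le_snorm[OF assms(1,2) j] assms(4)[OF j] by linarith
  next
    case False
    then have "(1::real) / 2 ^ j \<le> 1 / 2 ^ N" by (simp add: frac_le)
    then show ?thesis using dist_term_le_inverse_power[of j u v] assms(3) by linarith
  qed
qed

lemma snorm_less_of_Ck_dist:
  assumes "u \<in> Ck c d k" "v \<in> Ck c d k" "enat j \<le> k" "e \<le> 1" "Ck_dist u v < e / 2 ^ j"
  shows "snorm j (u - v) < e"
proof -
  have "min 1 (snorm j (u - v)) / 2 ^ j < e / 2 ^ j"
    using dist_term_le_Ck_dist[OF assms(1-3)] assms(5) unfolding dist_term_def by linarith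
  then show ?thesis using assms(4) by (simp add: divide_less_cancel)
qed

lemma snorm_diff_self:
  assumes "u \<in> Ck c d k" "enat j \<le> k"
  shows "snorm j (u - u) = 0"
proof -
  have "snorm j (u - u) \<le> 0"
    by (rule snorm_le) (simp add: Ck_deriv_diff[OF assms(1) assms(1) assms(2)])
  then show ?thesis using snorm_nonneg[OF Ck_diff[OF assms(1,1)] assms(2)] by simp
qed

lemma Ck_dist_nonneg: "0 \<le> Ck_dist u v"
proof (cases "u \<in> Ck c d k \<and> v \<in> Ck c d k")
  case True
  have "0 \<le> dist_term 0 u v"
    unfolding dist_term_def
    using snorm_nonneg[OF Ck_diff[of u v] zero_le[of k, unfolded zero_enat_def]] True by simp
  also have "\<dots> \<le> Ck_dist u v"
    using True dist_term_le_Ck_dist[of u v 0] by (simp add: zero_enat_def[symmetric])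
  finally show ?thesis .
qed (auto simp: Ck_dist_def)

lemma Ck_dist_commute: "Ck_dist u v = Ck_dist v u"
proof (cases "u \<in> Ck c d k \<and> v \<in> Ck c d k")
  case True
  have "(SUP j\<in>{j. enat j \<le> k}. dist_term j u v) = (SUP j\<in>{j. enat j \<le> k}. dist_term j v u)"
    using True snorm_diff_commute[of u v] by (intro SUP_cong) (simp_all add: dist_term_def)
  then show ?thesis unfolding Ck_dist_def by simp
qed (auto simp: Ck_dist_def)

lemma Ck_dist_eq_0_iff:
  assumes uv: "u \<in> Ck c d k" "v \<in> Ck c d k"
  shows "Ck_dist u v = 0 \<longleftrightarrow> u = v"
proof
  have k0: "enat 0 \<le> k" by (simp add: zero_enat_def[symmetric])
  assume "Ck_dist u v = 0"
  then have "snorm 0 (u - v) \<le> 0"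
    using dist_term_le_Ck_dist[OF uv k0] unfolding dist_term_def by simp
  then have eq: "u x = v x" if "x \<in> {c..d}" for x
  proof -
    have "cmod (u x - v x) \<le> snorm 0 (u - v)"
      using norm_Ck_deriv_diff_le_snorm[OF uv k0 that] by (simp add: Ck_deriv_0 uv)
    with \<open>snorm 0 (u - v) \<le> 0\<close> have "cmod (u x - v x) \<le> 0" by linarith
    then show ?thesis by simp
  qed
  show "u = v"
  proof
    fix x
    show "u x = v x"
      using eq[of x] Ck_vanishes[OF uv(1), of x] Ck_vanishes[OF uv(2), of x] by (cases "x \<in> {c..d}") auto
  qed
next
  assume "u = v"
  have "Ck_dist u v \<le> 0"
  proof (rule Ck_dist_le[OF uv])
    fix j assume "enat j \<le> k"
    then show "dist_term j u v \<le> 0"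
      unfolding dist_term_def \<open>u = v\<close> using snorm_diff_self[OF uv(2)] by simp
  qed
  then show "Ck_dist u v = 0" using Ck_dist_nonneg[of u v] by simp
qed

lemma Ck_dist_triangle:
  assumes uvw: "u \<in> Ck c d k" "v \<in> Ck c d k" "w \<in> Ck c d k"
  shows "Ck_dist u w \<le> Ck_dist u v + Ck_dist v w"
proof (rule Ck_dist_le[OF uvw(1,3)])
  fix j assume j: "enat j \<le> k"
  have "dist_term j u w \<le> (min 1 (snorm j (u - v)) + min 1 (snorm j (v - w))) / 2 ^ j"
    unfolding dist_term_def
    by (intro divide_right_mono min_one_subadditive snorm_diff_triangle[OF uvw j]
        snorm_nonneg Ck_diff uvw j) simp
  also have "\<dots> = dist_term j u v + dist_term j v w"
    unfolding dist_term_def by (simp add: add_divide_distrib)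
  also have "\<dots> \<le> Ck_dist u v + Ck_dist v w"
    using dist_term_le_Ck_dist[OF uvw(1,2) j] dist_term_le_Ck_dist[OF uvw(2,3) j] by linarith
  finally show "dist_term j u w \<le> Ck_dist u v + Ck_dist v w" .
qed

sublocale Ck_metric: Metric_space "Ck c d k" Ck_dist
  by (rule Metric_space.intro[OF Ck_dist_nonneg Ck_dist_commute Ck_dist_eq_0_iff Ck_dist_triangle])

lemma openin_snorm_ball:
  assumes "u \<in> Ck c d k" "enat j \<le> k"
  shows "openin Ck_metric.mtopology {v \<in> Ck c d k. snorm j (v - u) < e}"
  unfolding Ck_metric.openin_mtopology
proof (intro conjI allI impI)
  fix v assume "v \<in> {v \<in> Ck c d k. snorm j (v - u) < e}"
  then have v: "v \<in> Ck c d k" and vu: "snorm j (v - u) < e" by auto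
  define r where "r = min 1 (e - snorm j (v - u)) / 2 ^ j"
  have "Ck_metric.mball v r \<subseteq> {v \<in> Ck c d k. snorm j (v - u) < e}"
  proof
    fix w assume "w \<in> Ck_metric.mball v r"
    then have w: "w \<in> Ck c d k" and "Ck_dist v w < r" by auto
    then have "snorm j (v - w) < min 1 (e - snorm j (v - u))"
      using snorm_less_of_Ck_dist[OF v w assms(2), of "min 1 (e - snorm j (v - u))"]
      unfolding r_def by simp
    moreover have "snorm j (w - u) \<le> snorm j (w - v) + snorm j (v - u)"
      by (rule snorm_diff_triangle[OF w v assms])
    ultimately show "w \<in> {v \<in> Ck c d k. snorm j (v - u) < e}"
      using w snorm_diff_commute[OF w v assms(2)] by simp
  qed
  moreover have "r > 0" unfolding r_def using vu by simp
  ultimately show "\<exists>r>0. Ck_metric.mball v r \<subseteq> {v \<in> Ck c d k. snorm j (v - u) < e}" by blast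
qed auto

lemma snorm_balls_subset_mball:
  assumes "u \<in> Ck c d k" "1 / 2 ^ N \<le> r / 2"
  shows "(\<Inter>j\<in>{j. enat j \<le> k \<and> j \<le> N}. {v \<in> Ck c d k. snorm j (v - u) < r / 2})
    \<subseteq> Ck_metric.mball u r"
proof
  fix v assume v: "v \<in> (\<Inter>j\<in>{j. enat j \<le> k \<and> j \<le> N}. {v \<in> Ck c d k. snorm j (v - u) < r / 2})"
  have "enat 0 \<le> k" by (simp add: zero_enat_def[symmetric])
  then have vC: "v \<in> Ck c d k" using v by auto
  have "Ck_dist u v \<le> r / 2"
  proof (rule Ck_dist_le_snorm[OF assms(1) vC assms(2)])
    fix j assume j: "enat j \<le> k" "j \<le> N"
    then have "snorm j (v - u) < r / 2" using v by auto
    then show "snorm j (u - v) \<le> r / 2" using snorm_diff_commute[OF assms(1) vC j(1)] by simp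
  qed
  moreover have "0 < r"
  proof -
    have "0 < 1 / (2::real) ^ N" by simp
    then show ?thesis using assms(2) by linarith
  qed
  ultimately show "v \<in> Ck_metric.mball u r" using assms(1) vC by simp
qed

lemma Ck_topology_eq: "Ck_topology c d k = Ck_metric.mtopology"
proof -
  define \<B> where "\<B> = {{v \<in> Ck c d k. snorm j (v - u) < e} | j u e. enat j \<le> k \<and> u \<in> Ck c d k \<and> e > 0}"
  have gen: "Ck_topology c d k = topology_generated_by \<B>"
    unfolding Ck_topology_def \<B>_def ..
  have "generate_topology_on \<B> U \<longleftrightarrow> openin Ck_metric.mtopology U" for U
  proof
    assume "generate_topology_on \<B> U"
    then show "openin Ck_metric.mtopology U"
      by (rule generate_topology_on_coarsest[where T = "openin Ck_metric.mtopology",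
            OF istopology_openin, rotated])
        (auto simp: \<B>_def intro: openin_snorm_ball)
  next
    assume U: "openin Ck_metric.mtopology U"
    have "\<exists>V. u \<in> V \<and> V \<subseteq> U \<and> generate_topology_on \<B> V" if "u \<in> U" for u
    proof -
      obtain r where r: "r > 0" "Ck_metric.mball u r \<subseteq> U"
        using U \<open>u \<in> U\<close> unfolding Ck_metric.openin_mtopology by blast
      have u: "u \<in> Ck c d k" using U \<open>u \<in> U\<close> unfolding Ck_metric.openin_mtopology by blast
      obtain N where N: "1 / 2 ^ N < r / 2"
        using ex_inverse_power_two_less[of "r / 2"] r by auto
      define B where "B j = {v \<in> Ck c d k. snorm j (v - u) < r / 2}" for j
      define V where "V = (\<Inter>j\<in>{j. enat j \<le> k \<and> j \<le> N}. B j)"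
      have "B j \<in> \<B>" if "enat j \<le> k" for j
        unfolding \<B>_def B_def using that u r(1) half_gt_zero by blast
      moreover have "finite {j. enat j \<le> k \<and> j \<le> N}"
        by (rule finite_subset[of _ "{..N}"]) auto
      moreover have "enat 0 \<le> k" by (simp add: zero_enat_def[symmetric])
      ultimately have "generate_topology_on \<B> V"
        unfolding V_def by (intro generate_topology_on_Inter generate_topology_on.Basis) auto
      moreover have "u \<in> V"
        unfolding V_def B_def using u r by (simp add: snorm_diff_self)
      moreover have "V \<subseteq> U"
        unfolding V_def B_def using snorm_balls_subset_mball[OF u, of N r] N r(2) by auto
      ultimately show ?thesis by blast
    qed
    then obtain V where V: "\<And>u. u \<in> U \<Longrightarrow> u \<in> V u \<and> V u \<subseteq> U \<and> generate_topology_on \<B> (V u)"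
      by metis
    then have "U = \<Union>(V ` U)" by blast
    moreover have "generate_topology_on \<B> (\<Union>(V ` U))"
      using V by (intro generate_topology_on.UN) auto
    ultimately show "generate_topology_on \<B> U" by simp
  qed
  then show ?thesis
    unfolding gen topology_eq openin_topology_generated_by_iff by blast
qed

lemma uniform_limit_Ck_deriv:
  assumes \<sigma>: "Ck_metric.MCauchy \<sigma>" and j: "enat j \<le> k"
  shows "\<exists>F. uniform_limit {c..d} (\<lambda>n. der j (\<sigma> n)) F sequentially"
proof -
  have \<sigma>C: "\<sigma> n \<in> Ck c d k" for n
    using \<sigma> unfolding Ck_metric.MCauchy_def by auto
  have "uniformly_Cauchy_on {c..d} (\<lambda>n. der j (\<sigma> n))"
    unfolding uniformly_Cauchy_on_def
  proof (intro allI impI)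
    fix e :: real assume "0 < e"
    define e' where "e' = min 1 e"
    have "0 < e' / 2 ^ j" unfolding e'_def using \<open>0 < e\<close> by simp
    then obtain N where N: "\<And>m n. N \<le> m \<Longrightarrow> N \<le> n \<Longrightarrow> Ck_dist (\<sigma> m) (\<sigma> n) < e' / 2 ^ j"
      using \<sigma> unfolding Ck_metric.MCauchy_def by meson
    have "dist (der j (\<sigma> m) x) (der j (\<sigma> n) x) < e"
      if "x \<in> {c..d}" "N \<le> m" "N \<le> n" for x m n
      using norm_Ck_deriv_diff_le_snorm[OF \<sigma>C \<sigma>C j that(1), of m n]
        snorm_less_of_Ck_dist[OF \<sigma>C \<sigma>C j _ N[OF that(2,3)]]
      unfolding e'_def dist_norm by fastforce
    then show "\<exists>M. \<forall>x\<in>{c..d}. \<forall>m\<ge>M. \<forall>n\<ge>M. dist (der j (\<sigma> m) x) (der j (\<sigma> n) x) < e"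
      by blast
  qed
  then show ?thesis
    using Cauchy_uniformly_convergent unfolding uniformly_convergent_on_def by blast
qed

lemma Ck_metric_mcomplete: "Ck_metric.mcomplete"
  unfolding Ck_metric.mcomplete_def
proof (intro allI impI)
  fix \<sigma> assume \<sigma>: "Ck_metric.MCauchy \<sigma>"
  have \<sigma>C: "\<sigma> n \<in> Ck c d k" for n
    using \<sigma> unfolding Ck_metric.MCauchy_def by auto
  obtain F where F: "\<And>j. enat j \<le> k \<Longrightarrow> uniform_limit {c..d} (\<lambda>n. der j (\<sigma> n)) (F j) sequentially"
    using uniform_limit_Ck_deriv[OF \<sigma>] by metis
  \<comment> \<open>setting the limits to 0 off [c, d] makes the limit function vanish there, as required in Ck\<close>
  define D where "D j x = (if x \<in> {c..d} then F j x else 0)" for j x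
  have D: "uniform_limit {c..d} (\<lambda>n. der j (\<sigma> n)) (D j) sequentially" if "enat j \<le> k" for j
    using F[OF that] unfolding D_def uniform_limit_iff by (auto elim!: eventually_mono)
  have hD: "has_derivs c d k D"
    by (rule has_derivs_uniform_limit[OF less_imp_le[OF less] has_derivs_Ck_deriv[OF \<sigma>C] D])
  define u where "u = D 0"
  have u: "u \<in> Ck c d k"
    unfolding Ck_def u_def using hD by (auto simp: D_def)
  have der_u: "der j u x = D j x" if "enat j \<le> k" "x \<in> {c..d}" for j x
    using Ck_deriv_eq[OF u u_def[symmetric] hD that] .
  have "\<forall>\<^sub>F n in sequentially. \<sigma> n \<in> Ck c d k \<and> Ck_dist (\<sigma> n) u < \<epsilon>" if "\<epsilon> > 0" for \<epsilon>
  proof -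
    obtain N where N: "1 / 2 ^ N < \<epsilon> / 2"
      using ex_inverse_power_two_less[of "\<epsilon> / 2"] \<open>\<epsilon> > 0\<close> by auto
    have "\<forall>\<^sub>F n in sequentially. \<forall>j\<in>{j. enat j \<le> k \<and> j \<le> N}. \<forall>x\<in>{c..d}.
        dist (der j (\<sigma> n) x) (D j x) < \<epsilon> / 2"
    proof (rule eventually_ball_finite)
      show "finite {j. enat j \<le> k \<and> j \<le> N}"
        by (rule finite_subset[of _ "{..N}"]) auto
      show "\<forall>j\<in>{j. enat j \<le> k \<and> j \<le> N}. \<forall>\<^sub>F n in sequentially. \<forall>x\<in>{c..d}.
          dist (der j (\<sigma> n) x) (D j x) < \<epsilon> / 2"
      proof
        fix j assume "j \<in> {j. enat j \<le> k \<and> j \<le> N}"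
        then show "\<forall>\<^sub>F n in sequentially. \<forall>x\<in>{c..d}. dist (der j (\<sigma> n) x) (D j x) < \<epsilon> / 2"
          using \<open>\<epsilon> > 0\<close> by (intro uniform_limitD[OF D]) simp_all
      qed
    qed
    then show ?thesis
    proof eventually_elim
      case (elim n)
      have "Ck_dist (\<sigma> n) u \<le> \<epsilon> / 2"
      proof (rule Ck_dist_le_snorm[OF \<sigma>C u less_imp_le[OF N]])
        fix j assume j: "enat j \<le> k" "j \<le> N"
        show "snorm j (\<sigma> n - u) \<le> \<epsilon> / 2"
          using elim j by (intro snorm_le)
            (auto simp: Ck_deriv_diff[OF \<sigma>C u j(1)] der_u dist_norm less_imp_le)
      qed
      then show ?case using \<sigma>C \<open>\<epsilon> > 0\<close> by simp
    qed
  qed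
  then have "limitin Ck_metric.mtopology \<sigma> u sequentially"
    unfolding Ck_metric.limitin_metric using u by blast
  then show "\<exists>u. limitin Ck_metric.mtopology \<sigma> u sequentially" by blast
qed

lemma completely_metrizable_Ck: "completely_metrizable_space (Ck_topology c d k)"
  unfolding Ck_topology_eq
  using Ck_metric.completely_metrizable_space_mtopology Ck_metric_mcomplete by blast

lemma uniform_limit_of_Ck_limit:
  assumes "limitin Ck_metric.mtopology \<sigma> u sequentially"
  shows "uniform_limit {c..d} \<sigma> u sequentially"
proof (rule uniform_limitI)
  fix e :: real assume "0 < e"
  have k0: "enat 0 \<le> k" by (simp add: zero_enat_def[symmetric])
  have u: "u \<in> Ck c d k" using assms Ck_metric.limitin_mspace by blast
  have lim: "\<forall>\<epsilon>>0. \<forall>\<^sub>F n in sequentially. \<sigma> n \<in> Ck c d k \<and> Ck_dist (\<sigma> n) u < \<epsilon>"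
    using assms unfolding Ck_metric.limitin_metric by (rule conjunct2)
  have "0 < min 1 e" using \<open>0 < e\<close> by simp
  with lim have "\<forall>\<^sub>F n in sequentially. \<sigma> n \<in> Ck c d k \<and> Ck_dist (\<sigma> n) u < min 1 e"
    by blast
  then show "\<forall>\<^sub>F n in sequentially. \<forall>x\<in>{c..d}. dist (\<sigma> n x) (u x) < e"
  proof eventually_elim
    case (elim n)
    then have "snorm 0 (\<sigma> n - u) < min 1 e"
      using snorm_less_of_Ck_dist[OF _ u k0, of "\<sigma> n" "min 1 e"] by simp
    show ?case
    proof
      fix x assume x: "x \<in> {c..d}"
      have "cmod (\<sigma> n x - u x) \<le> snorm 0 (\<sigma> n - u)"
        using norm_Ck_deriv_diff_le_snorm[OF _ u k0 x, of "\<sigma> n"] elim by (simp add: Ck_deriv_0 u)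
      then show "dist (\<sigma> n x) (u x) < e"
        using \<open>snorm 0 (\<sigma> n - u) < min 1 e\<close> by (simp add: dist_norm)
    qed
  qed
qed

lemma Ck_dist_add_small:
  assumes u: "u \<in> Ck c d k" and f: "f \<in> Ck c d k" and "r > 0"
  shows "\<exists>t>0. Ck_dist u (\<lambda>x. u x + of_real t * f x) < r"
proof -
  obtain N where N: "1 / 2 ^ N < r / 2"
    using ex_inverse_power_two_less[of "r / 2"] \<open>r > 0\<close> by auto
  define P where "P = (\<Sum>j\<in>{j. enat j \<le> k \<and> j \<le> N}. snorm j f)"
  have P: "snorm j f \<le> P" if "enat j \<le> k" "j \<le> N" for j
    unfolding P_def using that snorm_nonneg[OF f]
    by (intro member_le_sum) auto
  have "0 \<le> P" using P[of 0] snorm_nonneg[OF f, of 0] by (simp add: zero_enat_def[symmetric])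
  define t where "t = r / (4 * (P + 1))"
  have t: "t > 0" "t * P \<le> r / 2"
    using \<open>r > 0\<close> \<open>0 \<le> P\<close> by (auto simp: t_def field_simps)
  define v where "v = (\<lambda>x. 1 * u x + of_real t * f x)"
  have v: "v \<in> Ck c d k" unfolding v_def by (rule Ck_lincomb[OF u f])
  have "Ck_dist u v \<le> r / 2"
  proof (rule Ck_dist_le_snorm[OF u v less_imp_le[OF N]])
    fix j assume j: "enat j \<le> k" "j \<le> N"
    have "snorm j (u - v) \<le> t * snorm j f"
    proof (rule snorm_le)
      fix x assume x: "x \<in> {c..d}"
      have "der j (u - v) x = - (of_real t * der j f x)"
        using Ck_deriv_diff[OF u v j(1) x] Ck_deriv_lincomb[OF u f j(1) x, of 1 "of_real t"]
        unfolding v_def by simp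
      then show "cmod (der j (u - v) x) \<le> t * snorm j f"
        using norm_Ck_deriv_le_snorm[OF f j(1) x] t(1) by (simp add: norm_mult)
    qed
    also have "\<dots> \<le> t * P" using P[OF j] t(1) by simp
    finally show "snorm j (u - v) \<le> r / 2" using t(2) by linarith
  qed
  then show ?thesis using t(1) \<open>r > 0\<close> unfolding v_def by (intro exI[of _ t]) auto
qed

lemma Ck_dist_cnj:
  assumes "u \<in> Ck c d k" "v \<in> Ck c d k"
  shows "Ck_dist (cnj \<circ> u) (cnj \<circ> v) = Ck_dist u v"
proof -
  have "(cnj \<circ> u) - (cnj \<circ> v) = cnj \<circ> (u - v)" by (simp add: fun_eq_iff)
  then have "snorm j ((cnj \<circ> u) - (cnj \<circ> v)) = snorm j (u - v)" if "enat j \<le> k" for j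
    using snorm_cnj[OF Ck_diff[OF assms] that] by simp
  then have "(SUP j\<in>{j. enat j \<le> k}. dist_term j (cnj \<circ> u) (cnj \<circ> v)) =
      (SUP j\<in>{j. enat j \<le> k}. dist_term j u v)"
    by (intro SUP_cong) (simp_all add: dist_term_def)
  then show ?thesis
    unfolding Ck_dist_def using assms Ck_cnj by simp
qed

lemma homeomorphic_map_cnj: "homeomorphic_map (Ck_topology c d k) (Ck_topology c d k) ((\<circ>) cnj)"
proof (rule homeomorphic_map_involution)
  show "continuous_map (Ck_topology c d k) (Ck_topology c d k) ((\<circ>) cnj)"
    unfolding Ck_topology_eq Ck_metric.metric_continuous_map[OF Ck_metric.Metric_space_axioms]
    by (auto simp: Ck_cnj Ck_dist_cnj)
qed (simp add: fun_eq_iff)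

end

section \<open>An estimate for holomorphic functions on a triangle near the real axis\<close>

definition upper_triangle :: "real \<Rightarrow> real \<Rightarrow> complex set" where
  "upper_triangle x0 \<eta> = {y. 0 \<le> Im y \<and> Re y + Im y \<le> x0 + \<eta> \<and> Im y - Re y \<le> \<eta> - x0}"

lemma convex_upper_triangle: "convex (upper_triangle x0 \<eta>)"
proof -
  have eq: "upper_triangle x0 \<eta> = {y. inner (-\<i>) y \<le> 0} \<inter> {y. inner (1 + \<i>) y \<le> x0 + \<eta>} \<inter>
      {y. inner (\<i> - 1) y \<le> \<eta> - x0}"
    unfolding upper_triangle_def by (auto simp: inner_complex_def)
  show ?thesis unfolding eq by (intro convex_Int convex_halfspace_le)
qed

lemma upper_triangle_eq_convex_hull:
  assumes "\<eta> > 0"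
  shows "convex hull {Complex (x0 - \<eta>) 0, Complex (x0 + \<eta>) 0, Complex x0 \<eta>} = upper_triangle x0 \<eta>"
proof
  show "convex hull {Complex (x0 - \<eta>) 0, Complex (x0 + \<eta>) 0, Complex x0 \<eta>} \<subseteq> upper_triangle x0 \<eta>"
    by (rule hull_minimal) (use convex_upper_triangle assms in \<open>auto simp: upper_triangle_def\<close>)
next
  show "upper_triangle x0 \<eta> \<subseteq> convex hull {Complex (x0 - \<eta>) 0, Complex (x0 + \<eta>) 0, Complex x0 \<eta>}"
  proof
    fix y assume y: "y \<in> upper_triangle x0 \<eta>"
    define s t where "s = Re y - x0" and "t = Im y"
    have st: "0 \<le> t" "s + t \<le> \<eta>" "t - s \<le> \<eta>"
      using y unfolding upper_triangle_def s_def t_def by auto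
    \<comment> \<open>barycentric coordinates of y\<close>
    define \<alpha> \<beta> \<gamma> where "\<alpha> = (\<eta> - t - s) / (2 * \<eta>)" and "\<beta> = (\<eta> - t + s) / (2 * \<eta>)"
      and "\<gamma> = t / \<eta>"
    have "0 \<le> \<alpha>" "0 \<le> \<beta>" "0 \<le> \<gamma>" "\<alpha> + \<beta> + \<gamma> = 1"
      using st assms unfolding \<alpha>_def \<beta>_def \<gamma>_def by (auto simp: divide_simps)
    moreover have "y = \<alpha> *\<^sub>R Complex (x0 - \<eta>) 0 + \<beta> *\<^sub>R Complex (x0 + \<eta>) 0 + \<gamma> *\<^sub>R Complex x0 \<eta>"
      using assms unfolding \<alpha>_def \<beta>_def \<gamma>_def s_def t_def by (simp add: complex_eq_iff field_simps)
    ultimately show "y \<in> convex hull {Complex (x0 - \<eta>) 0, Complex (x0 + \<eta>) 0, Complex x0 \<eta>}"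
      unfolding convex_hull_3 by blast
  qed
qed

lemma upper_triangle_Im_nonneg: "y \<in> upper_triangle x0 \<eta> \<Longrightarrow> 0 \<le> Im y"
  unfolding upper_triangle_def by simp

lemma norm_diff_le_of_upper_triangle: "y \<in> upper_triangle x0 \<eta> \<Longrightarrow> cmod (y - of_real x0) \<le> \<eta>"
  using cmod_le[of "y - of_real x0"] unfolding upper_triangle_def by auto

lemma interior_upper_triangleI:
  assumes "0 < Im z" "cmod (z - of_real x0) < \<eta> / 4"
  shows "z \<in> interior (upper_triangle x0 \<eta>)"
proof -
  have "ball z (min (Im z) (\<eta> / 4)) \<subseteq> upper_triangle x0 \<eta>"
  proof
    fix y assume "y \<in> ball z (min (Im z) (\<eta> / 4))"
    then have yz: "cmod (y - z) < Im z" "cmod (y - z) < \<eta> / 4"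
      by (auto simp: dist_norm norm_minus_commute)
    have "cmod (y - of_real x0) \<le> cmod (y - z) + cmod (z - of_real x0)"
      using norm_triangle_ineq[of "y - z" "z - of_real x0"] by simp
    then have "cmod (y - of_real x0) < \<eta> / 2" using yz assms by linarith
    then show "y \<in> upper_triangle x0 \<eta>"
      unfolding upper_triangle_def
      using yz abs_Im_le_cmod[of "y - z"] abs_Re_le_cmod[of "y - of_real x0"]
        abs_Im_le_cmod[of "y - of_real x0"] by auto
  qed
  moreover have "0 < min (Im z) (\<eta> / 4)"
    using assms norm_ge_zero[of "z - of_real x0"] by linarith
  ultimately show ?thesis unfolding mem_interior by blast
qed

lemma Im_pos_of_interior_upper_triangle:
  assumes "y \<in> interior (upper_triangle x0 \<eta>)"
  shows "0 < Im y"
proof -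
  obtain e where e: "e > 0" "ball y e \<subseteq> upper_triangle x0 \<eta>"
    using assms unfolding mem_interior by auto
  have "y - \<i> * of_real (e / 2) \<in> ball y e"
    using e by (simp add: dist_norm norm_mult)
  then have "y - \<i> * of_real (e / 2) \<in> upper_triangle x0 \<eta>" using e by auto
  then show ?thesis unfolding upper_triangle_def using e by auto
qed

lemma has_integral_arctan_kernel:
  fixes y \<eta> s :: real
  assumes "y > 0" "\<eta> > 0"
  shows "((\<lambda>t. 4 * \<eta> * y / ((s - \<eta> + 2 * \<eta> * t)\<^sup>2 + y\<^sup>2)) has_integral
     (2 * arctan ((s + \<eta>) / y) - 2 * arctan ((s - \<eta>) / y))) {0..1}"
proof -
  define F where "F t = 2 * arctan ((s - \<eta> + 2 * \<eta> * t) / y)" for t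
  have "(F has_vector_derivative (4 * \<eta> * y / ((s - \<eta> + 2 * \<eta> * t)\<^sup>2 + y\<^sup>2))) (at t within {0..1})"
    for t
  proof -
    have "(F has_real_derivative
        (2 * (inverse (1 + ((s - \<eta> + 2 * \<eta> * t) / y)\<^sup>2) * (2 * \<eta> / y)))) (at t within {0..1})"
      unfolding F_def using assms by (auto intro!: derivative_eq_intros simp: field_simps)
    moreover have "2 * (inverse (1 + ((s - \<eta> + 2 * \<eta> * t) / y)\<^sup>2) * (2 * \<eta> / y)) =
        4 * \<eta> * y / ((s - \<eta> + 2 * \<eta> * t)\<^sup>2 + y\<^sup>2)"
      using assms by (simp add: field_simps power2_eq_square)
    ultimately show ?thesis by (simp add: has_real_derivative_iff_has_vector_derivative)
  qed
  then have "((\<lambda>t. 4 * \<eta> * y / ((s - \<eta> + 2 * \<eta> * t)\<^sup>2 + y\<^sup>2)) has_integral (F 1 - F 0)) {0..1}"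
    by (intro fundamental_theorem_of_calculus) auto
  then show ?thesis unfolding F_def by (simp add: algebra_simps)
qed

text \<open>The reflected term integrates to zero over the triangle, and on the real axis the modulus
  of this kernel is the Poisson kernel.\<close>

definition poisson_integrand :: "(complex \<Rightarrow> complex) \<Rightarrow> complex \<Rightarrow> complex \<Rightarrow> complex" where
  "poisson_integrand h z w = h w / (w - z) - h w / (w - cnj z)"

lemma norm_poisson_integrand:
  assumes "0 < Im z" "w \<noteq> z" "w \<noteq> cnj z"
  shows "cmod (poisson_integrand h z w) = cmod (h w) * (2 * Im z) / (cmod (w - z) * cmod (w - cnj z))"
proof -
  have "poisson_integrand h z w = h w * (z - cnj z) / ((w - z) * (w - cnj z))"
    unfolding poisson_integrand_def using assms(2,3) by (simp add: field_simps)
  moreover have "cmod (z - cnj z) = 2 * Im z"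
    unfolding complex_diff_cnj using assms(1) by (simp add: norm_mult)
  ultimately show ?thesis by (simp add: norm_mult norm_divide)
qed

lemma norm_diff_le_norm_diff_cnj:
  assumes "0 \<le> Im w" "0 \<le> Im z"
  shows "cmod (w - z) \<le> cmod (w - cnj z)"
proof -
  have "(Im w - Im z)\<^sup>2 \<le> (Im w + Im z)\<^sup>2"
    using assms by (simp add: power2_eq_square algebra_simps)
  then have "(cmod (w - z))\<^sup>2 \<le> (cmod (w - cnj z))\<^sup>2" unfolding cmod_power2 by simp
  then show ?thesis by (simp add: power2_le_iff_abs_le)
qed

lemma norm_diff_ge_on_upper_triangle_sides:
  assumes "\<zeta> \<in> closed_segment (Complex (x0 + \<eta>) 0) (Complex x0 \<eta>) \<union>
      closed_segment (Complex x0 \<eta>) (Complex (x0 - \<eta>) 0)"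
    and "0 < \<eta>" "cmod (z - of_real x0) < \<eta> / 4"
  shows "\<eta> / 4 \<le> cmod (\<zeta> - z)"
proof -
  have "\<bar>Re \<zeta> - x0\<bar> + Im \<zeta> = \<eta>"
    using assms(1)
  proof
    assume "\<zeta> \<in> closed_segment (Complex (x0 + \<eta>) 0) (Complex x0 \<eta>)"
    then obtain u where u: "0 \<le> u" "u \<le> 1"
      "\<zeta> = (1 - u) *\<^sub>R Complex (x0 + \<eta>) 0 + u *\<^sub>R Complex x0 \<eta>"
      unfolding closed_segment_def by blast
    have "Re \<zeta> - x0 = \<eta> - u * \<eta>" "Im \<zeta> = u * \<eta>"
      unfolding u(3) by (simp_all add: algebra_simps)
    moreover have "u * \<eta> \<le> \<eta>" using mult_right_mono[OF u(2), of \<eta>] \<open>0 < \<eta>\<close> by simp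
    ultimately show ?thesis by arith
  next
    assume "\<zeta> \<in> closed_segment (Complex x0 \<eta>) (Complex (x0 - \<eta>) 0)"
    then obtain u where u: "0 \<le> u" "u \<le> 1"
      "\<zeta> = (1 - u) *\<^sub>R Complex x0 \<eta> + u *\<^sub>R Complex (x0 - \<eta>) 0"
      unfolding closed_segment_def by blast
    have "Re \<zeta> - x0 = - (u * \<eta>)" "Im \<zeta> = \<eta> - u * \<eta>"
      unfolding u(3) by (simp_all add: algebra_simps)
    moreover have "0 \<le> u * \<eta>" using u(1) \<open>0 < \<eta>\<close> by simp
    ultimately show ?thesis by arith
  qed
  then have "\<eta> \<le> 2 * cmod (\<zeta> - of_real x0)"
    using abs_Re_le_cmod[of "\<zeta> - of_real x0"] abs_Im_le_cmod[of "\<zeta> - of_real x0"] by auto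
  moreover have "cmod (\<zeta> - of_real x0) \<le> cmod (\<zeta> - z) + cmod (z - of_real x0)"
    using norm_triangle_ineq[of "\<zeta> - z" "z - of_real x0"] by simp
  ultimately show ?thesis using assms(3) by linarith
qed

lemma upper_triangle_sides:
  fixes x0 \<eta> :: real
  defines "a \<equiv> Complex (x0 - \<eta>) 0" and "b \<equiv> Complex (x0 + \<eta>) 0" and "e \<equiv> Complex x0 \<eta>"
  assumes \<eta>: "\<eta> > 0" and z: "0 < Im z" "cmod (z - of_real x0) < \<eta> / 4"
  shows "closed_segment a b \<union> closed_segment b e \<union> closed_segment e a \<subseteq> upper_triangle x0 \<eta>"
    and "z \<notin> closed_segment a b \<union> closed_segment b e \<union> closed_segment e a"
proof -
  have hull: "convex hull {a, b, e} = upper_triangle x0 \<eta>"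
    unfolding a_def b_def e_def using upper_triangle_eq_convex_hull[OF \<eta>] .
  show "closed_segment a b \<union> closed_segment b e \<union> closed_segment e a \<subseteq> upper_triangle x0 \<eta>"
    unfolding hull[symmetric] segment_convex_hull by (auto intro!: hull_mono)
  have "z \<notin> closed_segment a b"
    using z(1) unfolding a_def b_def closed_segment_def by auto
  moreover have "z \<notin> closed_segment b e \<union> closed_segment e a"
    using norm_diff_ge_on_upper_triangle_sides[OF _ \<eta> z(2)] \<eta> unfolding a_def b_def e_def by force
  ultimately show "z \<notin> closed_segment a b \<union> closed_segment b e \<union> closed_segment e a"
    by blast
qed

lemma winding_number_upper_triangle:
  fixes x0 \<eta> :: real
  defines "a \<equiv> Complex (x0 - \<eta>) 0" and "b \<equiv> Complex (x0 + \<eta>) 0" and "e \<equiv> Complex x0 \<eta>"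
  assumes \<eta>: "\<eta> > 0" and z: "0 < Im z" "cmod (z - of_real x0) < \<eta> / 4"
  shows "winding_number (linepath a b +++ linepath b e +++ linepath e a) z = 1"
proof (rule wn_triangle3)
  show "z \<in> interior (convex hull {a, b, e})"
    using interior_upper_triangleI[OF z] upper_triangle_eq_convex_hull[OF \<eta>]
    unfolding a_def b_def e_def by simp
  define s t where "s = Re z - x0" and "t = Im z"
  have "\<bar>s\<bar> + t < \<eta> / 2"
    using z abs_Re_le_cmod[of "z - of_real x0"] abs_Im_le_cmod[of "z - of_real x0"]
    unfolding s_def t_def by auto
  then have "0 < \<eta> - t - s \<and> 0 < \<eta> - t + s" using \<eta> by arith
  moreover have "Im ((b - a) * cnj (b - z)) = 2 * \<eta> * t" "Im ((e - b) * cnj (e - z)) = \<eta> * (\<eta> - t - s)"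
    "Im ((a - e) * cnj (a - z)) = \<eta> * (\<eta> - t + s)"
    unfolding a_def b_def e_def s_def t_def by (simp_all add: algebra_simps)
  ultimately show "0 < Im ((b - a) * cnj (b - z))" "0 < Im ((e - b) * cnj (e - z))"
      "0 < Im ((a - e) * cnj (a - z))"
    using \<eta> z(1) unfolding t_def by auto
qed

lemma has_contour_integral_poisson_integrand:
  fixes h :: "complex \<Rightarrow> complex" and x0 \<eta> :: real
  defines "a \<equiv> Complex (x0 - \<eta>) 0" and "b \<equiv> Complex (x0 + \<eta>) 0" and "e \<equiv> Complex x0 \<eta>"
  assumes \<eta>: "\<eta> > 0"
    and cont: "continuous_on (upper_triangle x0 \<eta>) h"
    and hol: "\<And>y. y \<in> upper_triangle x0 \<eta> \<Longrightarrow> 0 < Im y \<Longrightarrow> h field_differentiable (at y)"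
    and z: "0 < Im z" "cmod (z - of_real x0) < \<eta> / 4"
  shows "(poisson_integrand h z has_contour_integral (2 * pi * \<i> * h z))
    (linepath a b +++ linepath b e +++ linepath e a)"
proof -
  define T where "T = upper_triangle x0 \<eta>"
  define \<gamma> where "\<gamma> = linepath a b +++ linepath b e +++ linepath e a"
  have pim: "path_image \<gamma> = closed_segment a b \<union> closed_segment b e \<union> closed_segment e a"
    unfolding \<gamma>_def by (simp add: path_image_join Un_assoc)
  have imT: "path_image \<gamma> \<subseteq> T" and z\<gamma>: "z \<notin> path_image \<gamma>"
    using upper_triangle_sides[OF \<eta> z] unfolding pim T_def a_def b_def e_def by auto
  have zT: "z \<in> interior T"
    unfolding T_def by (rule interior_upper_triangleI[OF z])
  have hol': "h field_differentiable at y" if "y \<in> interior T - {}" for y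
    using hol[of y] that interior_subset[of T] Im_pos_of_interior_upper_triangle[of y x0 \<eta>]
    unfolding T_def by auto
  have W: "winding_number \<gamma> z = 1"
    unfolding \<gamma>_def a_def b_def e_def by (rule winding_number_upper_triangle[OF \<eta> z])
  have f1: "((\<lambda>w. h w / (w - z)) has_contour_integral (2 * pi * \<i> * winding_number \<gamma> z * h z)) \<gamma>"
    by (rule Cauchy_integral_formula_convex[OF convex_upper_triangle[of x0 \<eta>, folded T_def]
          finite.emptyI cont[folded T_def] hol' zT])
      (use imT z\<gamma> in \<open>auto simp: \<gamma>_def\<close>)
  have cz: "y \<noteq> cnj z" if "y \<in> T" for y
    using upper_triangle_Im_nonneg[of y x0 \<eta>] that z(1) unfolding T_def by auto
  have f2: "((\<lambda>w. h w / (w - cnj z)) has_contour_integral 0) \<gamma>"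
  proof (rule Cauchy_theorem_convex[OF _ convex_upper_triangle[of x0 \<eta>, folded T_def] finite.emptyI])
    show "continuous_on T (\<lambda>w. h w / (w - cnj z))"
      using cz by (intro continuous_on_divide cont[folded T_def] continuous_intros) auto
    fix y assume y: "y \<in> interior T - {}"
    then have "y \<in> T" using interior_subset by auto
    then show "(\<lambda>w. h w / (w - cnj z)) field_differentiable at y"
      using hol'[OF y] cz by (intro field_differentiable_divide field_differentiable_diff)
        (auto intro: field_differentiable_ident field_differentiable_const)
  qed (use imT in \<open>auto simp: \<gamma>_def\<close>)
  show ?thesis
    using has_contour_integral_diff[OF f1 f2] W unfolding poisson_integrand_def \<gamma>_def by simp
qed

lemma norm_poisson_integrand_side_le:
  assumes \<eta>: "\<eta> > 0" and \<zeta>: "\<zeta> \<in> upper_triangle x0 \<eta>"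
    and side: "\<zeta> \<in> closed_segment (Complex (x0 + \<eta>) 0) (Complex x0 \<eta>) \<union>
      closed_segment (Complex x0 \<eta>) (Complex (x0 - \<eta>) 0)"
    and B: "cmod (h \<zeta>) \<le> B"
    and z: "0 < Im z" "cmod (z - of_real x0) < \<eta> / 4"
  shows "cmod (poisson_integrand h z \<zeta>) \<le> 32 * B * Im z / \<eta>\<^sup>2"
proof -
  have far: "\<eta> / 4 \<le> cmod (\<zeta> - z)"
    by (rule norm_diff_ge_on_upper_triangle_sides[OF side \<eta> z(2)])
  have near: "cmod (\<zeta> - z) \<le> cmod (\<zeta> - cnj z)"
    using norm_diff_le_norm_diff_cnj upper_triangle_Im_nonneg[OF \<zeta>] z(1) by simp
  have "\<zeta> \<noteq> z" "\<zeta> \<noteq> cnj z"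
    using far near \<eta> by auto
  have "0 \<le> B" using B norm_ge_zero[of "h \<zeta>"] by linarith
  have den: "(\<eta> / 4) * (\<eta> / 4) \<le> cmod (\<zeta> - z) * cmod (\<zeta> - cnj z)"
    using far near \<eta> by (intro mult_mono) auto
  have "cmod (poisson_integrand h z \<zeta>) = cmod (h \<zeta>) * (2 * Im z) / (cmod (\<zeta> - z) * cmod (\<zeta> - cnj z))"
    by (rule norm_poisson_integrand[OF z(1) \<open>\<zeta> \<noteq> z\<close> \<open>\<zeta> \<noteq> cnj z\<close>])
  also have "\<dots> \<le> B * (2 * Im z) / ((\<eta> / 4) * (\<eta> / 4))"
    using B z(1) \<eta> den \<open>0 \<le> B\<close> by (intro frac_le mult_right_mono) auto
  also have "\<dots> = 32 * B * Im z / \<eta>\<^sup>2"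
    by (simp add: field_simps power2_eq_square)
  finally show ?thesis .
qed

lemma norm_poisson_integrand_real:
  assumes "0 < Im z" "Im w = 0"
  shows "cmod (poisson_integrand h z w) = cmod (h w) * (2 * Im z) / ((Re w - Re z)\<^sup>2 + (Im z)\<^sup>2)"
proof -
  have "w \<noteq> z" "w \<noteq> cnj z" using assms by auto
  have "w - cnj z = cnj (w - z)" using assms(2) by (simp add: complex_eq_iff)
  then have "cmod (w - z) * cmod (w - cnj z) = (cmod (w - z))\<^sup>2"
    by (metis complex_mod_cnj power2_eq_square)
  also have "\<dots> = (Re w - Re z)\<^sup>2 + (Im z)\<^sup>2"
    unfolding cmod_power2 using assms(2) by simp
  finally show ?thesis
    using norm_poisson_integrand[OF assms(1) \<open>w \<noteq> z\<close> \<open>w \<noteq> cnj z\<close>] by simp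
qed

lemma norm_poisson_integral_base_le:
  assumes \<eta>: "\<eta> > 0" and z: "0 < Im z"
    and bnd: "\<And>x. x0 - \<eta> \<le> x \<Longrightarrow> x \<le> x0 + \<eta> \<Longrightarrow> cmod (h (of_real x)) \<le> \<epsilon>"
    and i: "(poisson_integrand h z has_contour_integral i) (linepath (Complex (x0 - \<eta>) 0) (Complex (x0 + \<eta>) 0))"
  shows "cmod i \<le> 2 * pi * \<epsilon>"
proof -
  define a b where "a = Complex (x0 - \<eta>) 0" and "b = Complex (x0 + \<eta>) 0"
  have hi: "((\<lambda>t. poisson_integrand h z (linepath a b t) * (b - a)) has_integral i) {0..1}"
    using i unfolding a_def b_def has_contour_integral_linepath .
  have "cmod (h (of_real x0)) \<le> \<epsilon>" using \<eta> by (intro bnd) auto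
  then have \<epsilon>: "0 \<le> \<epsilon>" using norm_ge_zero[of "h (of_real x0)"] by linarith
  \<comment> \<open>the Poisson kernel of the upper half plane, integrated along the base\<close>
  define g where "g t = \<epsilon> * (4 * \<eta> * Im z / ((x0 - Re z - \<eta> + 2 * \<eta> * t)\<^sup>2 + (Im z)\<^sup>2))" for t
  have hg: "(g has_integral (\<epsilon> * (2 * arctan ((x0 - Re z + \<eta>) / Im z) -
      2 * arctan ((x0 - Re z - \<eta>) / Im z)))) {0..1}"
    unfolding g_def by (intro has_integral_mult_right has_integral_arctan_kernel z \<eta>)
  have le: "norm (poisson_integrand h z (linepath a b t) * (b - a)) \<le> g t" if t: "t \<in> {0..1}" for t
  proof -
    define w where "w = linepath a b t"
    have w: "w = of_real (x0 - \<eta> + 2 * \<eta> * t)"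
      unfolding w_def linepath_def a_def b_def by (simp add: complex_eq_iff algebra_simps)
    have "0 \<le> \<eta> * t" "\<eta> * t \<le> \<eta>"
      using t \<eta> mult_left_le[of t \<eta>] by auto
    then have "x0 - \<eta> \<le> x0 - \<eta> + 2 * \<eta> * t" "x0 - \<eta> + 2 * \<eta> * t \<le> x0 + \<eta>"
      by linarith+
    then have hw: "cmod (h w) \<le> \<epsilon>" unfolding w by (rule bnd)
    have "(Re w - Re z)\<^sup>2 = (x0 - Re z - \<eta> + 2 * \<eta> * t)\<^sup>2"
      unfolding w by (simp add: algebra_simps)
    moreover have "b - a = of_real (2 * \<eta>)"
      unfolding a_def b_def by (simp add: complex_eq_iff)
    then have "cmod (b - a) = 2 * \<eta>" using \<eta> by simp
    ultimately have "norm (poisson_integrand h z w * (b - a)) =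
        cmod (h w) * (2 * Im z) / ((x0 - Re z - \<eta> + 2 * \<eta> * t)\<^sup>2 + (Im z)\<^sup>2) * (2 * \<eta>)"
      using norm_poisson_integrand_real[OF z, of w h] unfolding w by (simp add: norm_mult)
    also have "\<dots> \<le> \<epsilon> * (2 * Im z) / ((x0 - Re z - \<eta> + 2 * \<eta> * t)\<^sup>2 + (Im z)\<^sup>2) * (2 * \<eta>)"
      using hw z \<eta> by (intro mult_right_mono divide_right_mono) auto
    also have "\<dots> = g t" unfolding g_def by (simp add: field_simps)
    finally show ?thesis unfolding w_def .
  qed
  have "cmod i \<le> integral {0..1} g"
    using integral_norm_bound_integral[OF has_integral_integrable[OF hi] has_integral_integrable[OF hg] le]
      integral_unique[OF hi] by simp
  also have "\<dots> = \<epsilon> * (2 * arctan ((x0 - Re z + \<eta>) / Im z) - 2 * arctan ((x0 - Re z - \<eta>) / Im z))"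
    using integral_unique[OF hg] .
  also have "\<dots> \<le> \<epsilon> * (2 * pi)"
    using arctan_bounded[of "(x0 - Re z + \<eta>) / Im z"] arctan_bounded[of "(x0 - Re z - \<eta>) / Im z"] \<epsilon>
    by (intro mult_left_mono) auto
  finally show ?thesis by (simp add: mult.commute)
qed

lemma poisson_integral_split:
  fixes h :: "complex \<Rightarrow> complex" and x0 \<eta> :: real
  defines "a \<equiv> Complex (x0 - \<eta>) 0" and "b \<equiv> Complex (x0 + \<eta>) 0" and "e \<equiv> Complex x0 \<eta>"
  assumes \<eta>: "\<eta> > 0"
    and cont: "continuous_on (upper_triangle x0 \<eta>) h"
    and hol: "\<And>y. y \<in> upper_triangle x0 \<eta> \<Longrightarrow> 0 < Im y \<Longrightarrow> h field_differentiable (at y)"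
    and z: "0 < Im z" "cmod (z - of_real x0) < \<eta> / 4"
  obtains I1 I2 I3 where "(poisson_integrand h z has_contour_integral I1) (linepath a b)"
    "(poisson_integrand h z has_contour_integral I2) (linepath b e)"
    "(poisson_integrand h z has_contour_integral I3) (linepath e a)"
    "2 * pi * \<i> * h z = I1 + (I2 + I3)"
proof -
  define k where "k = poisson_integrand h z"
  have "y \<noteq> cnj z" if "y \<in> upper_triangle x0 \<eta>" for y
    using upper_triangle_Im_nonneg[of y x0 \<eta>] that z(1) by auto
  then have kcont: "continuous_on (upper_triangle x0 \<eta> - {z}) k"
    unfolding k_def poisson_integrand_def by (intro continuous_intros continuous_on_subset[OF cont]) auto
  have integral: "(k has_contour_integral contour_integral (linepath p q) k) (linepath p q)"
    if "closed_segment p q \<subseteq> upper_triangle x0 \<eta>" "z \<notin> closed_segment p q" for p q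
  proof (rule has_contour_integral_integral, rule contour_integrable_continuous_linepath)
    show "continuous_on (closed_segment p q) k"
      using kcont by (rule continuous_on_subset) (use that in blast)
  qed
  have i1: "(k has_contour_integral contour_integral (linepath a b) k) (linepath a b)"
    and i2: "(k has_contour_integral contour_integral (linepath b e) k) (linepath b e)"
    and i3: "(k has_contour_integral contour_integral (linepath e a) k) (linepath e a)"
    using upper_triangle_sides[OF \<eta> z] unfolding a_def b_def e_def by (auto intro!: integral)
  have "(k has_contour_integral (contour_integral (linepath a b) k +
      (contour_integral (linepath b e) k + contour_integral (linepath e a) k)))
      (linepath a b +++ linepath b e +++ linepath e a)"
    by (intro has_contour_integral_join i1 i2 i3 valid_path_join) auto
  moreover have "(k has_contour_integral (2 * pi * \<i> * h z)) (linepath a b +++ linepath b e +++ linepath e a)"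
    unfolding k_def a_def b_def e_def by (rule has_contour_integral_poisson_integrand[OF \<eta> cont hol z])
  ultimately show ?thesis
    using that[OF i1[unfolded k_def] i2[unfolded k_def] i3[unfolded k_def]] has_contour_integral_unique
    unfolding k_def by blast
qed

text \<open>In the Cauchy integral against the kernel above, the base of the triangle contributes at
  most \<epsilon> and the two upper sides only O(Im z).\<close>

lemma poisson_bound_upper_triangle:
  fixes h :: "complex \<Rightarrow> complex"
  assumes \<eta>: "\<eta> > 0"
    and cont: "continuous_on (upper_triangle x0 \<eta>) h"
    and hol: "\<And>y. y \<in> upper_triangle x0 \<eta> \<Longrightarrow> 0 < Im y \<Longrightarrow> h field_differentiable (at y)"
    and bB: "\<And>y. y \<in> upper_triangle x0 \<eta> \<Longrightarrow> cmod (h y) \<le> B"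
    and b\<epsilon>: "\<And>y. y \<in> upper_triangle x0 \<eta> \<Longrightarrow> Im y = 0 \<Longrightarrow> cmod (h y) \<le> \<epsilon>"
    and z: "0 < Im z" "cmod (z - of_real x0) < \<eta> / 4"
  shows "cmod (h z) \<le> \<epsilon> + 32 / \<eta> * B * Im z"
proof -
  define a b e where "a = Complex (x0 - \<eta>) 0" and "b = Complex (x0 + \<eta>) 0" and "e = Complex x0 \<eta>"
  define M where "M = 32 * B * Im z / \<eta>\<^sup>2"
  obtain I1 I2 I3 where i1: "(poisson_integrand h z has_contour_integral I1) (linepath a b)"
    and i2: "(poisson_integrand h z has_contour_integral I2) (linepath b e)"
    and i3: "(poisson_integrand h z has_contour_integral I3) (linepath e a)"
    and sum: "2 * pi * \<i> * h z = I1 + (I2 + I3)"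
    using poisson_integral_split[OF \<eta> cont hol z] unfolding a_def b_def e_def by metis
  have segs: "closed_segment a b \<union> closed_segment b e \<union> closed_segment e a \<subseteq> upper_triangle x0 \<eta>"
    using upper_triangle_sides(1)[OF \<eta> z] unfolding a_def b_def e_def .
  then have "a \<in> upper_triangle x0 \<eta>" by auto
  then have "0 \<le> B" using bB[of a] norm_ge_zero[of "h a"] by linarith
  then have M0: "0 \<le> M" unfolding M_def using z(1) by simp
  have base: "cmod I1 \<le> 2 * pi * \<epsilon>"
  proof (rule norm_poisson_integral_base_le[OF \<eta> z(1)])
    fix x assume "x0 - \<eta> \<le> x" "x \<le> x0 + \<eta>"
    then show "cmod (h (of_real x)) \<le> \<epsilon>" by (intro b\<epsilon>) (auto simp: upper_triangle_def)
  qed (use i1 in \<open>simp add: a_def b_def\<close>)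
  have side: "cmod (poisson_integrand h z \<zeta>) \<le> M" if "\<zeta> \<in> closed_segment b e \<union> closed_segment e a" for \<zeta>
    unfolding M_def
  proof (rule norm_poisson_integrand_side_le[OF \<eta> _ _ _ z])
    show "\<zeta> \<in> upper_triangle x0 \<eta>" "cmod (h \<zeta>) \<le> B" using that segs bB by auto
    show "\<zeta> \<in> closed_segment (Complex (x0 + \<eta>) 0) (Complex x0 \<eta>) \<union>
        closed_segment (Complex x0 \<eta>) (Complex (x0 - \<eta>) 0)"
      using that by (simp add: a_def b_def e_def)
  qed
  have "cmod (e - b) \<le> 2 * \<eta>" "cmod (a - e) \<le> 2 * \<eta>"
    using cmod_le[of "e - b"] cmod_le[of "a - e"] \<eta> unfolding a_def b_def e_def by auto
  then have "cmod I2 \<le> M * (2 * \<eta>)" "cmod I3 \<le> M * (2 * \<eta>)"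
    using has_contour_integral_bound_linepath[OF i2 M0] has_contour_integral_bound_linepath[OF i3 M0]
      side mult_left_mono[OF _ M0] by (meson UnCI order_trans)+
  moreover have "2 * pi * cmod (h z) = cmod (I1 + (I2 + I3))"
    using arg_cong[OF sum, of cmod] by (simp add: norm_mult)
  ultimately have "2 * pi * cmod (h z) \<le> 2 * pi * \<epsilon> + (M * (2 * \<eta>) + M * (2 * \<eta>))"
    using norm_triangle_ineq[of I1 "I2 + I3"] norm_triangle_ineq[of I2 I3] base by linarith
  also have "M * (2 * \<eta>) + M * (2 * \<eta>) = 128 * (B * Im z / \<eta>)"
    unfolding M_def using \<eta> by (simp add: field_simps power2_eq_square)
  also have "\<dots> \<le> (2 * pi * 32) * (B * Im z / \<eta>)"
    using pi_gt3 \<open>0 \<le> B\<close> z(1) \<eta> by (intro mult_right_mono) auto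
  finally have "2 * pi * cmod (h z) \<le> 2 * pi * (\<epsilon> + 32 / \<eta> * B * Im z)"
    by (simp add: algebra_simps)
  then show ?thesis by simp
qed

section \<open>Limits of bounded holomorphic extensions\<close>

lemma open_upper_half_disc: "open (upper_half_disc z0 r)"
  unfolding upper_half_disc_def by (intro open_Int open_ball open_halfspace_Im_gt)

lemma open_lower_half_disc: "open (lower_half_disc z0 r)"
  unfolding lower_half_disc_def by (intro open_Int open_ball open_halfspace_Im_lt)

lemma of_real_mem_ball_iff: "(of_real x :: complex) \<in> ball (of_real q) r \<longleftrightarrow> \<bar>x - q\<bar> < r"
  by (simp add: dist_norm abs_minus_commute flip: of_real_diff)

lemma of_real_image_interval_iff:
  fixes y :: complex
  shows "y \<in> of_real ` {q - r<..<q + r} \<longleftrightarrow> y \<in> ball (of_real q) r \<and> Im y = 0"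
proof
  assume "y \<in> of_real ` {q - r<..<q + r}"
  then show "y \<in> ball (of_real q) r \<and> Im y = 0" by (auto simp: dist_real_def abs_less_iff)
next
  assume y: "y \<in> ball (of_real q) r \<and> Im y = 0"
  then have yR: "y = of_real (Re y)" by (simp add: complex_eq_iff)
  have "(of_real (Re y) :: complex) \<in> ball (of_real q) r" using y by (subst yR[symmetric]) simp
  then have "Re y \<in> {q - r<..<q + r}" by (simp add: dist_real_def abs_less_iff)
  then show "y \<in> of_real ` {q - r<..<q + r}" by (subst yR) (rule imageI)
qed

lemma upper_triangle_subset_upper_half_disc:
  assumes "x0 \<in> {q - \<rho><..<q + \<rho>}"
  shows "upper_triangle x0 ((\<rho> - \<bar>x0 - q\<bar>) / 2) \<subseteq>
    upper_half_disc (of_real q) \<rho> \<union> of_real ` {q - \<rho><..<q + \<rho>}"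
proof
  fix y assume y: "y \<in> upper_triangle x0 ((\<rho> - \<bar>x0 - q\<bar>) / 2)"
  have "cmod (y - of_real q) \<le> cmod (y - of_real x0) + cmod (of_real x0 - (of_real q :: complex))"
    using norm_triangle_ineq[of "y - of_real x0" "of_real x0 - of_real q"] by simp
  also have "\<dots> \<le> (\<rho> - \<bar>x0 - q\<bar>) / 2 + \<bar>x0 - q\<bar>"
    using norm_diff_le_of_upper_triangle[OF y] by (simp flip: of_real_diff)
  also have "\<dots> < \<rho>" using assms by (auto simp: field_simps)
  finally have yq: "cmod (y - of_real q) < \<rho>" .
  show "y \<in> upper_half_disc (of_real q) \<rho> \<union> of_real ` {q - \<rho><..<q + \<rho>}"
  proof (cases "Im y = 0")
    case True
    then have "y = of_real (Re y)" by (simp add: complex_eq_iff)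
    moreover have "Re y \<in> {q - \<rho><..<q + \<rho>}"
      using yq of_real_mem_ball_iff[of "Re y" q \<rho>] calculation
      by (auto simp: dist_norm norm_minus_commute abs_less_iff)
    ultimately show ?thesis by blast
  next
    case False
    then show ?thesis
      using upper_triangle_Im_nonneg[OF y] yq
      unfolding upper_half_disc_def by (auto simp: dist_norm norm_minus_commute)
  qed
qed

lemma norm_diff_limit_near_diameter:
  fixes h :: "nat \<Rightarrow> complex \<Rightarrow> complex" and G :: "complex \<Rightarrow> complex" and u :: "real \<Rightarrow> complex"
    and q \<rho> :: real
  defines "\<Omega> \<equiv> upper_half_disc (of_real q) \<rho>" and "I \<equiv> {q - \<rho><..<q + \<rho>}"
  assumes hol: "\<And>n. h n holomorphic_on \<Omega>"
    and cont: "\<And>n. continuous_on (\<Omega> \<union> of_real ` I) (h n)"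
    and bnd: "\<And>n z. z \<in> \<Omega> \<Longrightarrow> cmod (h n z) \<le> M"
    and lim: "\<And>z. z \<in> \<Omega> \<Longrightarrow> (\<lambda>m. h m z) \<longlonglongrightarrow> G z"
    and close: "\<And>m x. N \<le> m \<Longrightarrow> x \<in> I \<Longrightarrow> cmod (h m (of_real x) - u x) \<le> e"
    and n: "N \<le> n" and x0: "x0 \<in> I"
    and z: "0 < Im z" "cmod (z - of_real x0) < (\<rho> - \<bar>x0 - q\<bar>) / 8"
  shows "cmod (h n z - G z) \<le> 2 * e + 64 / (\<rho> - \<bar>x0 - q\<bar>) * (2 * M + 2 * e) * Im z"
proof -
  define \<eta> where "\<eta> = (\<rho> - \<bar>x0 - q\<bar>) / 2"
  have \<eta>: "\<eta> > 0" using x0 unfolding \<eta>_def I_def by auto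
  have T: "upper_triangle x0 \<eta> \<subseteq> \<Omega> \<union> of_real ` I"
    unfolding \<eta>_def \<Omega>_def I_def by (rule upper_triangle_subset_upper_half_disc[OF x0[unfolded I_def]])
  have "z \<in> upper_triangle x0 \<eta>"
    using interior_upper_triangleI[of z x0 \<eta>] interior_subset z unfolding \<eta>_def by auto
  then have z\<Omega>: "z \<in> \<Omega>" using T z(1) by auto
  have e: "0 \<le> e" using close[OF order_refl x0] norm_ge_zero order_trans by blast
  have "q + \<i> * of_real (\<rho> / 2) \<in> \<Omega>"
    using x0 unfolding \<Omega>_def I_def upper_half_disc_def by (simp add: dist_norm norm_mult)
  then have M: "0 \<le> M" using bnd norm_ge_zero order_trans by blast
  have real: "cmod (h n y - h m y) \<le> 2 * e" if m: "N \<le> m" and y: "y \<in> of_real ` I" for m y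
  proof -
    obtain x where "x \<in> I" "y = of_real x" using y by blast
    then show ?thesis
      using close[OF n, of x] close[OF m, of x] norm_triangle_ineq4[of "h n y - u x" "h m y - u x"]
      by simp
  qed
  have est: "cmod (h n z - h m z) \<le> 2 * e + 32 / \<eta> * (2 * M + 2 * e) * Im z" if m: "N \<le> m" for m
  proof (rule poisson_bound_upper_triangle[OF \<eta> _ _ _ _ z(1)])
    show "continuous_on (upper_triangle x0 \<eta>) (\<lambda>y. h n y - h m y)"
      using T by (intro continuous_on_diff continuous_on_subset[OF cont])
    fix y assume y: "y \<in> upper_triangle x0 \<eta>"
    then have "y \<in> \<Omega> \<or> y \<in> of_real ` I" using T by auto
    moreover have "y \<in> of_real ` I" if "Im y = 0" using calculation that by (auto simp: \<Omega>_def upper_half_disc_def)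
    ultimately show "cmod (h n y - h m y) \<le> 2 * M + 2 * e"
      using bnd[of y n] bnd[of y m] norm_triangle_ineq4[of "h n y" "h m y"] real[OF m, of y] e M by force
    show "Im y = 0 \<Longrightarrow> cmod (h n y - h m y) \<le> 2 * e"
      using real[OF m] \<open>Im y = 0 \<Longrightarrow> y \<in> of_real ` I\<close> by blast
    show "0 < Im y \<Longrightarrow> (\<lambda>y. h n y - h m y) field_differentiable at y"
      using \<open>y \<in> \<Omega> \<or> y \<in> of_real ` I\<close> hol open_upper_half_disc
      by (auto intro!: field_differentiable_diff holomorphic_on_imp_differentiable_at simp: \<Omega>_def)
  qed (use z \<eta>_def in auto)
  have "(\<lambda>m. cmod (h n z - h m z)) \<longlonglongrightarrow> cmod (h n z - G z)"
    by (intro tendsto_norm tendsto_diff tendsto_const lim z\<Omega>)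
  then have "cmod (h n z - G z) \<le> 2 * e + 32 / \<eta> * (2 * M + 2 * e) * Im z"
    by (rule tendsto_upperbound) (use est in \<open>auto simp: eventually_sequentially\<close>)
  then show ?thesis unfolding \<eta>_def by simp
qed

lemma continuous_at_diameter_of_limit:
  fixes h :: "nat \<Rightarrow> complex \<Rightarrow> complex" and G :: "complex \<Rightarrow> complex" and u :: "real \<Rightarrow> complex"
    and q \<rho> :: real
  defines "\<Omega> \<equiv> upper_half_disc (of_real q) \<rho>" and "I \<equiv> {q - \<rho><..<q + \<rho>}"
  assumes hol: "\<And>n. h n holomorphic_on \<Omega>"
    and cont: "\<And>n. continuous_on (\<Omega> \<union> of_real ` I) (h n)"
    and bnd: "\<And>n z. z \<in> \<Omega> \<Longrightarrow> cmod (h n z) \<le> M"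
    and lim: "\<And>z. z \<in> \<Omega> \<Longrightarrow> (\<lambda>m. h m z) \<longlonglongrightarrow> G z"
    and ulim: "uniform_limit I (\<lambda>n x. h n (of_real x)) u sequentially"
    and x0: "x0 \<in> I" and "e > 0"
  shows "\<exists>d>0. \<forall>z\<in>\<Omega> \<union> of_real ` I. dist z (of_real x0) < d \<longrightarrow>
    dist (if 0 < Im z then G z else u (Re z)) (u x0) < e"
proof -
  define e' where "e' = e / 6"
  have "e' > 0" unfolding e'_def using \<open>e > 0\<close> by simp
  then obtain N where N: "\<And>n x. N \<le> n \<Longrightarrow> x \<in> I \<Longrightarrow> cmod (h n (of_real x) - u x) < e'"
    using uniform_limitD[OF ulim] unfolding eventually_sequentially dist_norm by blast
  obtain d1 where d1: "d1 > 0" "\<And>z. z \<in> \<Omega> \<union> of_real ` I \<Longrightarrow> dist z (of_real x0) < d1 \<Longrightarrow>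
      dist (h N z) (h N (of_real x0)) < e'"
    using cont[of N] x0 \<open>e' > 0\<close> unfolding continuous_on_iff by blast
  define K where "K = 64 / (\<rho> - \<bar>x0 - q\<bar>) * (2 * M + 2 * e')"
  have "q + \<i> * of_real (\<rho> / 2) \<in> \<Omega>"
    using x0 unfolding \<Omega>_def I_def upper_half_disc_def by (simp add: dist_norm norm_mult)
  then have "0 \<le> M" using bnd norm_ge_zero order_trans by blast
  then have "0 \<le> K" unfolding K_def using x0 \<open>e' > 0\<close> by (auto simp: I_def)
  define d where "d = min d1 (min ((\<rho> - \<bar>x0 - q\<bar>) / 8) (e' / (K + 1)))"
  have "d > 0" unfolding d_def using d1(1) x0 \<open>e' > 0\<close> \<open>0 \<le> K\<close> by (auto simp: I_def)
  moreover have "dist (if 0 < Im z then G z else u (Re z)) (u x0) < e"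
    if z: "z \<in> \<Omega> \<union> of_real ` I" "dist z (of_real x0) < d" for z
  proof -
    \<comment> \<open>pass through h N: it is close to u at x0, continuous, and close to G near the diameter\<close>
    have step: "dist (h N z) (u x0) < 2 * e'"
      using d1(2)[OF z(1)] z(2) N[OF order_refl x0]
        dist_triangle[where x = "h N z" and y = "h N (of_real x0)" and z = "u x0"]
      by (simp add: d_def dist_norm)
    show ?thesis
    proof (cases "0 < Im z")
      case True
      have key: "cmod (h N z - G z) \<le> 2 * e' + K * Im z"
        using norm_diff_limit_near_diameter[OF hol[unfolded \<Omega>_def] cont[unfolded \<Omega>_def I_def]
            bnd[unfolded \<Omega>_def] lim[unfolded \<Omega>_def] less_imp_le[OF N[unfolded I_def]]
            order_refl x0[unfolded I_def] True] z(2)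
        unfolding K_def d_def by (simp add: dist_norm)
      have "cmod (z - of_real x0) < e' / (K + 1)" using z(2) by (simp add: d_def dist_norm)
      then have "Im z < e' / (K + 1)"
        using abs_Im_le_cmod[of "z - of_real x0"] abs_ge_self[of "Im z"] by simp
      then have "K * Im z \<le> K * (e' / (K + 1))"
        using \<open>0 \<le> K\<close> by (intro mult_left_mono) auto
      also have "\<dots> < e'"
        using \<open>0 \<le> K\<close> \<open>e' > 0\<close> by (simp add: field_simps)
      finally show ?thesis
        using True step key dist_triangle[where x = "G z" and y = "h N z" and z = "u x0"] \<open>e > 0\<close>
        by (simp add: dist_norm norm_minus_commute e'_def)
    next
      case False
      then obtain x where x: "x \<in> I" "z = of_real x"
        using z(1) by (auto simp: \<Omega>_def upper_half_disc_def)
      then show ?thesis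
        using False step N[OF order_refl x(1)] dist_triangle[where x = "u x" and y = "h N z" and z = "u x0"]
          \<open>e > 0\<close> by (simp add: dist_norm norm_minus_commute e'_def)
    qed
  qed
  ultimately show ?thesis by blast
qed

lemma Montel_bounded:
  fixes g :: "nat \<Rightarrow> complex \<Rightarrow> complex"
  assumes S: "open S" and hol: "\<And>n. g n holomorphic_on S" and bnd: "\<And>n z. z \<in> S \<Longrightarrow> cmod (g n z) \<le> M"
  shows "\<exists>G r. G holomorphic_on S \<and> strict_mono r \<and> (\<forall>z\<in>S. (\<lambda>n. g (r n) z) \<longlonglongrightarrow> G z) \<and>
    (\<forall>z\<in>S. cmod (G z) \<le> M)"
proof -
  obtain G r where G: "G holomorphic_on S" "strict_mono r" "\<And>z. z \<in> S \<Longrightarrow> (\<lambda>n. g (r n) z) \<longlonglongrightarrow> G z"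
  proof (rule Montel[OF S, of "{f. f holomorphic_on S \<and> (\<forall>z\<in>S. cmod (f z) \<le> M)}" g])
    show "\<And>K. compact K \<Longrightarrow> K \<subseteq> S \<Longrightarrow>
        \<exists>B. \<forall>f\<in>{f. f holomorphic_on S \<and> (\<forall>z\<in>S. cmod (f z) \<le> M)}. \<forall>z\<in>K. cmod (f z) \<le> B"
      by (rule exI[of _ M]) auto
  qed (use hol bnd in auto)
  moreover have "cmod (G z) \<le> M" if "z \<in> S" for z
    by (rule Lim_norm_ubound[OF _ G(3)[OF that]]) (use bnd that in auto)
  ultimately show ?thesis by blast
qed

lemma bounded_upper_extension_limit:
  fixes g :: "nat \<Rightarrow> complex \<Rightarrow> complex" and u :: "real \<Rightarrow> complex" and q \<rho> :: real
  defines "\<Omega> \<equiv> upper_half_disc (of_real q) \<rho>" and "I \<equiv> {q - \<rho><..<q + \<rho>}"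
  assumes hol: "\<And>n. g n holomorphic_on \<Omega>"
    and cont: "\<And>n. continuous_on (\<Omega> \<union> of_real ` I) (g n)"
    and bnd: "\<And>n z. z \<in> \<Omega> \<Longrightarrow> cmod (g n z) \<le> M"
    and ulim: "uniform_limit I (\<lambda>n x. g n (of_real x)) u sequentially"
  shows "\<exists>G. G holomorphic_on \<Omega> \<and> continuous_on (\<Omega> \<union> of_real ` I) G \<and>
    (\<forall>z\<in>\<Omega>. cmod (G z) \<le> M) \<and> (\<forall>x\<in>I. G (of_real x) = u x)"
proof -
  obtain G0 r where G0: "G0 holomorphic_on \<Omega>" "strict_mono r"
    "\<forall>z\<in>\<Omega>. (\<lambda>n. g (r n) z) \<longlonglongrightarrow> G0 z" "\<forall>z\<in>\<Omega>. cmod (G0 z) \<le> M"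
    using Montel_bounded[where g = g, OF open_upper_half_disc[of "of_real q" \<rho>, folded \<Omega>_def] hol bnd]
    by blast
  have ulim': "uniform_limit I (\<lambda>n x. g (r n) (of_real x)) u sequentially"
    using filterlim_compose[OF ulim filterlim_subseq[OF G0(2)]] by (simp add: o_def)
  define G where "G z = (if 0 < Im z then G0 z else u (Re z))" for z
  have GG0: "G z = G0 z" if "z \<in> \<Omega>" for z
    using that unfolding G_def \<Omega>_def upper_half_disc_def by auto
  have Ghol: "G holomorphic_on \<Omega>"
    using G0(1) by (rule holomorphic_transform) (use GG0 in auto)
  have "continuous (at p within \<Omega> \<union> of_real ` I) G" if p: "p \<in> \<Omega> \<union> of_real ` I" for p
  proof (cases "p \<in> \<Omega>")
    case True
    have "isCont G p"
      by (rule continuous_on_interior[OF holomorphic_on_imp_continuous_on[OF Ghol]])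
        (use True open_upper_half_disc in \<open>simp add: \<Omega>_def interior_open\<close>)
    then show ?thesis by (rule continuous_at_imp_continuous_within)
  next
    case False
    then obtain x0 where x0: "x0 \<in> I" "p = of_real x0" using p by blast
    have "\<forall>e>0. \<exists>d>0. \<forall>z\<in>\<Omega> \<union> of_real ` I. dist z (of_real x0) < d \<longrightarrow> dist (G z) (u x0) < e"
      using continuous_at_diameter_of_limit[OF hol[unfolded \<Omega>_def] cont[unfolded \<Omega>_def I_def]
          bnd[unfolded \<Omega>_def] G0(3)[rule_format, unfolded \<Omega>_def] ulim'[unfolded I_def] x0(1)[unfolded I_def]]
      unfolding G_def \<Omega>_def I_def by blast
    moreover have "G p = u x0" unfolding G_def x0(2) by simp
    ultimately show ?thesis
      unfolding continuous_within_eps_delta x0(2) by simp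
  qed
  then have "continuous_on (\<Omega> \<union> of_real ` I) G"
    by (simp add: continuous_on_eq_continuous_within)
  then show ?thesis
    using Ghol G0(4) GG0 by (intro exI[of _ G]) (simp add: G_def)
qed

lemma bounded_disc_extension_limit:
  fixes g :: "nat \<Rightarrow> complex \<Rightarrow> complex" and u :: "real \<Rightarrow> complex" and q \<rho> :: real
  assumes hol: "\<And>n. g n holomorphic_on ball (of_real q) \<rho>"
    and bnd: "\<And>n z. z \<in> ball (of_real q) \<rho> \<Longrightarrow> cmod (g n z) \<le> M"
    and lim: "\<And>x. x \<in> {q - \<rho><..<q + \<rho>} \<Longrightarrow> (\<lambda>n. g n (of_real x)) \<longlonglongrightarrow> u x"
  shows "\<exists>G. G holomorphic_on ball (of_real q) \<rho> \<and> (\<forall>z\<in>ball (of_real q) \<rho>. cmod (G z) \<le> M) \<and>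
    (\<forall>x\<in>{q - \<rho><..<q + \<rho>}. G (of_real x) = u x)"
proof -
  obtain G r where G: "G holomorphic_on ball (of_real q) \<rho>" "strict_mono r"
    "\<forall>z\<in>ball (of_real q) \<rho>. (\<lambda>n. g (r n) z) \<longlonglongrightarrow> G z" "\<forall>z\<in>ball (of_real q) \<rho>. cmod (G z) \<le> M"
    using Montel_bounded[where g = g, OF open_ball hol bnd] by blast
  have "G (of_real x) = u x" if "x \<in> {q - \<rho><..<q + \<rho>}" for x
  proof (rule LIMSEQ_unique)
    show "(\<lambda>n. g (r n) (of_real x)) \<longlonglongrightarrow> G (of_real x)"
      using G(3) of_real_mem_ball_iff[of x q \<rho>] that by auto
    show "(\<lambda>n. g (r n) (of_real x)) \<longlonglongrightarrow> u x"
      using LIMSEQ_subseq_LIMSEQ[OF lim[OF that] G(2)] by (simp add: o_def)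
  qed
  then show ?thesis using G(1,4) by blast
qed

section \<open>A pole cannot be the boundary value of a bounded holomorphic function\<close>

lemma of_real_islimpt_interval:
  assumes "r > 0"
  shows "(of_real q :: complex) islimpt of_real ` {q - r<..<q + r}"
proof (rule islimpt_approachable[THEN iffD2], intro allI impI)
  fix e :: real assume "e > 0"
  define t where "t = min e r / 2"
  have t: "0 < t" "t < e" "t < r" unfolding t_def using \<open>r > 0\<close> \<open>e > 0\<close> by auto
  have "(of_real (q + t) :: complex) \<in> of_real ` {q - r<..<q + r}"
    using t by (intro imageI) simp
  moreover have "(of_real (q + t) :: complex) \<noteq> of_real q"
    using t by simp
  moreover have "dist (of_real (q + t)) (of_real q :: complex) < e"
    using t by (simp only: dist_of_real) (simp add: dist_real_def)
  ultimately show "\<exists>y\<in>of_real ` {q - r<..<q + r}. y \<noteq> (of_real q :: complex) \<and> dist y (of_real q) < e"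
    by blast
qed

lemma zero_on_upper_half_disc_of_zero_on_diameter:
  fixes H :: "complex \<Rightarrow> complex"
  assumes "r > 0"
    and hol: "H holomorphic_on upper_half_disc (of_real q) r"
    and cont: "continuous_on (upper_half_disc (of_real q) r \<union> of_real ` {q - r<..<q + r}) H"
    and zero: "\<And>x. x \<in> {q - r<..<q + r} \<Longrightarrow> H (of_real x) = 0"
    and z: "z \<in> upper_half_disc (of_real q) r"
  shows "H z = 0"
proof -
  define S where "S = ball (of_real q :: complex) r"
  define D where "D = (of_real ` {q - r<..<q + r} :: complex set)"
  have D: "y \<in> D \<longleftrightarrow> y \<in> S \<and> Im y = 0" for y
    unfolding D_def S_def by (rule of_real_image_interval_iff)
  have upper: "S \<inter> {y. 0 < Im y} = upper_half_disc (of_real q) r"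
    unfolding S_def upper_half_disc_def ..
  have closed_upper: "S \<inter> {y. 0 \<le> Im y} = upper_half_disc (of_real q) r \<union> D"
    unfolding upper[symmetric] using D by (auto simp: less_eq_real_def)
  define R where "R y = (if 0 \<le> Im y then H y else cnj (H (cnj y)))" for y
  have Rhol: "R holomorphic_on S"
    unfolding R_def
  proof (rule Schwarz_reflection)
    show "open S" unfolding S_def by simp
    show "cnj ` S \<subseteq> S"
    proof
      fix y assume "y \<in> cnj ` S"
      then obtain y' where "y' \<in> S" "y = cnj y'" by blast
      moreover have "cmod (of_real q - cnj y') = cmod (of_real q - y')"
        by (metis complex_cnj_complex_of_real complex_cnj_diff complex_mod_cnj)
      ultimately show "y \<in> S" by (simp add: S_def dist_norm)
    qed
    show "H holomorphic_on S \<inter> {y. 0 < Im y}" using hol by (simp add: upper)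
    show "continuous_on (S \<inter> {y. 0 \<le> Im y}) H" using cont by (simp add: closed_upper D_def)
    show "H y \<in> \<real>" if "y \<in> S" "y \<in> \<real>" for y
    proof -
      have "y \<in> D" using that D[of y] by (simp add: complex_is_Real_iff)
      then show ?thesis using zero unfolding D_def by auto
    qed
  qed
  have R0: "R y = 0" if "y \<in> D" for y
    using that zero unfolding D_def R_def by auto
  have "R z = 0"
  proof (rule analytic_continuation[OF Rhol, where U = D and \<xi> = "of_real q"])
    show "open S" "connected S" unfolding S_def by (simp_all add: convex_connected)
    show "D \<subseteq> S" using D by blast
    show "of_real q \<in> S" unfolding S_def using \<open>r > 0\<close> by simp
    show "of_real q islimpt D" unfolding D_def by (rule of_real_islimpt_interval[OF \<open>r > 0\<close>])
    show "z \<in> S" using z upper by blast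
  qed (rule R0)
  then show ?thesis using z by (simp add: R_def upper_half_disc_def)
qed

lemma unbounded_near_pole:
  fixes G :: "complex \<Rightarrow> complex"
  assumes "\<delta> > 0" and eq: "\<And>z. z \<in> ball w \<delta> - {w} \<Longrightarrow> G z = 1 / (z - w)"
    and bnd: "\<And>z. z \<in> ball w \<delta> - {w} \<Longrightarrow> cmod (G z) \<le> B"
  shows False
proof -
  define t where "t = min (\<delta> / 2) (1 / (\<bar>B\<bar> + 1))"
  have t: "0 < t" "t < \<delta>" "t \<le> 1 / (\<bar>B\<bar> + 1)"
    unfolding t_def using \<open>\<delta> > 0\<close> by auto
  then have z: "w + of_real t \<in> ball w \<delta> - {w}"
    by (auto simp: dist_norm)
  have "\<bar>B\<bar> + 1 \<le> 1 / t" using t by (simp add: field_simps)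
  also have "1 / t = cmod (G (w + of_real t))" using eq[OF z] t by (simp add: norm_divide)
  also have "\<dots> \<le> B" by (rule bnd[OF z])
  finally show False by linarith
qed

lemma ball_subset_upper_half_disc:
  assumes "\<rho> > 0"
  shows "ball (of_real q + \<i> * of_real (\<rho> / 2)) (\<rho> / 2) \<subseteq> upper_half_disc (of_real q) \<rho>"
proof
  define w where "w = of_real q + \<i> * of_real (\<rho> / 2)"
  fix z assume "z \<in> ball (of_real q + \<i> * of_real (\<rho> / 2)) (\<rho> / 2)"
  then have "cmod (z - w) < \<rho> / 2" by (simp add: dist_norm norm_minus_commute w_def)
  moreover have "cmod (z - of_real q) \<le> cmod (z - w) + cmod (w - of_real q)"
    using norm_triangle_ineq[of "z - w" "w - of_real q"] by simp
  moreover have "cmod (w - of_real q) = \<rho> / 2" unfolding w_def using assms by (simp add: norm_mult)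
  moreover have "Im w - Im z \<le> cmod (z - w)"
    using abs_Im_le_cmod[of "z - w"] by simp
  ultimately show "z \<in> upper_half_disc (of_real q) \<rho>"
    unfolding upper_half_disc_def w_def by (auto simp: dist_norm norm_minus_commute)
qed

lemma eq_pole_of_boundary_values:
  fixes G :: "complex \<Rightarrow> complex" and q \<rho> :: real
  defines "\<Omega> \<equiv> upper_half_disc (of_real q) \<rho>" and "I \<equiv> {q - \<rho><..<q + \<rho>}"
    and "w \<equiv> of_real q + \<i> * of_real (\<rho> / 2)"
  assumes "\<rho> > 0"
    and hol: "G holomorphic_on \<Omega>"
    and cont: "continuous_on (\<Omega> \<union> of_real ` I) G"
    and eq: "\<And>x. x \<in> I \<Longrightarrow> G (of_real x) = 1 / (of_real x - w)"
    and z: "z \<in> \<Omega> - {w}"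
  shows "G z = 1 / (z - w)"
proof -
  define \<Omega>' where "\<Omega>' = upper_half_disc (of_real q) (\<rho> / 4)"
  define H where "H z = G z - 1 / (z - w)" for z
  have w: "cmod (w - of_real q) = \<rho> / 2" unfolding w_def using \<open>\<rho> > 0\<close> by (simp add: norm_mult)
  have small: "\<Omega>' \<subseteq> \<Omega> - {w}"
  proof
    fix z assume "z \<in> \<Omega>'"
    then have "cmod (z - of_real q) < \<rho> / 4" "0 < Im z"
      by (auto simp: \<Omega>'_def upper_half_disc_def dist_norm norm_minus_commute)
    then show "z \<in> \<Omega> - {w}"
      using w \<open>\<rho> > 0\<close> unfolding \<Omega>_def upper_half_disc_def by (auto simp: dist_norm norm_minus_commute)
  qed
  have "of_real x \<noteq> w" for x using \<open>\<rho> > 0\<close> by (simp add: w_def complex_eq_iff)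
  then have "\<Omega>' \<union> of_real ` {q - \<rho> / 4<..<q + \<rho> / 4} \<subseteq> \<Omega> \<union> of_real ` I - {w}"
    using small \<open>\<rho> > 0\<close> unfolding I_def by auto
  then have "continuous_on (\<Omega>' \<union> of_real ` {q - \<rho> / 4<..<q + \<rho> / 4}) H"
    unfolding H_def by (intro continuous_intros continuous_on_subset[OF cont]) auto
  moreover have "H holomorphic_on \<Omega>'"
    unfolding H_def using small by (intro holomorphic_intros holomorphic_on_subset[OF hol]) auto
  moreover have "H (of_real x) = 0" if "x \<in> {q - \<rho> / 4<..<q + \<rho> / 4}" for x
    using that \<open>\<rho> > 0\<close> by (simp add: H_def eq I_def)
  ultimately have H0: "H z = 0" if "z \<in> \<Omega>'" for z
    using \<open>\<rho> > 0\<close> that unfolding \<Omega>'_def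
    by (intro zero_on_upper_half_disc_of_zero_on_diameter[of "\<rho> / 4" H q z]) auto
  show "G z = 1 / (z - w)"
  proof (rule analytic_continuation_open[where s = \<Omega>' and s' = "\<Omega> - {w}" and f = G and g = "\<lambda>z. 1 / (z - w)"])
    show "open \<Omega>'" "open (\<Omega> - {w})"
      using open_upper_half_disc unfolding \<Omega>_def \<Omega>'_def by auto
    show "connected (\<Omega> - {w})"
      unfolding \<Omega>_def upper_half_disc_def
      by (intro connected_open_delete convex_connected convex_Int convex_ball convex_halfspace_Im_gt
          open_Int open_ball open_halfspace_Im_gt) auto
    have "of_real q + \<i> * of_real (\<rho> / 8) \<in> \<Omega>'"
      using \<open>\<rho> > 0\<close> by (simp add: \<Omega>'_def upper_half_disc_def dist_norm norm_mult)
    then show "\<Omega>' \<noteq> {}" by blast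
    show "G holomorphic_on \<Omega> - {w}"
      using hol by (rule holomorphic_on_subset) blast
    show "(\<lambda>z. 1 / (z - w)) holomorphic_on \<Omega> - {w}"
      by (intro holomorphic_intros) simp
    show "G z = 1 / (z - w)" if "z \<in> \<Omega>'" for z
      using H0[OF that] by (simp add: H_def)
  qed (use small z in auto)
qed

lemma no_bounded_upper_extension_of_pole:
  fixes G :: "complex \<Rightarrow> complex" and q \<rho> :: real
  defines "\<Omega> \<equiv> upper_half_disc (of_real q) \<rho>" and "I \<equiv> {q - \<rho><..<q + \<rho>}"
    and "w \<equiv> of_real q + \<i> * of_real (\<rho> / 2)"
  assumes "\<rho> > 0"
    and hol: "G holomorphic_on \<Omega>"
    and cont: "continuous_on (\<Omega> \<union> of_real ` I) G"
    and bnd: "\<And>z. z \<in> \<Omega> \<Longrightarrow> cmod (G z) \<le> B"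
    and eq: "\<And>x. x \<in> I \<Longrightarrow> G (of_real x) = 1 / (of_real x - w)"
  shows False
proof (rule unbounded_near_pole[of "\<rho> / 2" w G B])
  fix z assume "z \<in> ball w (\<rho> / 2) - {w}"
  then have z: "z \<in> \<Omega> - {w}"
    using ball_subset_upper_half_disc[OF \<open>\<rho> > 0\<close>] unfolding \<Omega>_def w_def by blast
  show "G z = 1 / (z - w)"
    using eq_pole_of_boundary_values[OF \<open>\<rho> > 0\<close> hol[unfolded \<Omega>_def] cont[unfolded \<Omega>_def I_def]
        eq[unfolded I_def w_def] z[unfolded \<Omega>_def w_def]]
    unfolding w_def .
  show "cmod (G z) \<le> B" using z by (intro bnd) blast
qed (use \<open>\<rho> > 0\<close> in simp)

section \<open>Complements of countable unions of closed nowhere dense sets\<close>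

definition residual_in :: "'a topology \<Rightarrow> 'a set \<Rightarrow> bool" where
  "residual_in X S \<longleftrightarrow> (\<exists>\<A>. countable \<A> \<and> (\<forall>A\<in>\<A>. closedin X A \<and> X interior_of A = {}) \<and>
     S = topspace X - \<Union>\<A>)"

lemma residual_in_Int:
  assumes "residual_in X S" "residual_in X T"
  shows "residual_in X (S \<inter> T)"
proof -
  obtain \<A> \<B> where "countable \<A>" "\<forall>A\<in>\<A>. closedin X A \<and> X interior_of A = {}" "S = topspace X - \<Union>\<A>"
    "countable \<B>" "\<forall>B\<in>\<B>. closedin X B \<and> X interior_of B = {}" "T = topspace X - \<Union>\<B>"
    using assms unfolding residual_in_def by blast
  then show ?thesis
    unfolding residual_in_def by (intro exI[of _ "\<A> \<union> \<B>"]) auto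
qed

lemma residual_in_homeomorphic_image:
  assumes f: "homeomorphic_map X X f" and S: "residual_in X S"
  shows "residual_in X (f ` S)"
proof -
  obtain \<A> where \<A>: "countable \<A>" "\<And>A. A \<in> \<A> \<Longrightarrow> closedin X A \<and> X interior_of A = {}"
    "S = topspace X - \<Union>\<A>"
    using S unfolding residual_in_def by blast
  have inj: "inj_on f (topspace X)" and surj: "f ` topspace X = topspace X"
    using f by (auto simp: homeomorphic_eq_everything_map)
  have "f ` S = topspace X - \<Union>((`) f ` \<A>)"
  proof -
    have "\<Union>\<A> \<subseteq> topspace X" using \<A>(2) closedin_subset by blast
    then have "f ` (topspace X - \<Union>\<A>) = f ` topspace X - f ` \<Union>\<A>"
      by (intro inj_on_image_set_diff[OF inj]) auto
    then show ?thesis using \<A>(3) surj by (simp add: image_Union)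
  qed
  moreover have "closedin X (f ` A) \<and> X interior_of (f ` A) = {}" if "A \<in> \<A>" for A
    using \<A>(2)[OF that] closedin_subset[of X A]
      homeomorphic_map_closedness_eq[OF f, of A] homeomorphic_map_interior_of[OF f, of A] by auto
  ultimately show ?thesis
    unfolding residual_in_def using \<A>(1) by (intro exI[of _ "(`) f ` \<A>"]) auto
qed

lemma dense_gdelta_if_residual_in:
  assumes X: "completely_metrizable_space X" and S: "residual_in X S"
  shows "dense_gdelta X S"
proof -
  obtain \<A> where cA: "countable \<A>" and A: "\<And>A. A \<in> \<A> \<Longrightarrow> closedin X A \<and> X interior_of A = {}"
    and S: "S = topspace X - \<Union>\<A>"
    using S unfolding residual_in_def by blast
  define \<G> where "\<G> = insert (topspace X) ((\<lambda>A. topspace X - A) ` \<A>)"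
  have cG: "countable \<G>" unfolding \<G>_def using cA by simp
  have eq: "\<Inter>\<G> = S" unfolding \<G>_def S by auto
  have G: "openin X T \<and> X closure_of T = topspace X" if T: "T \<in> \<G>" for T
  proof -
    consider "T = topspace X" | A where "A \<in> \<A>" "T = topspace X - A"
      using T unfolding \<G>_def by blast
    then show ?thesis
    proof cases
      case 2
      then show ?thesis using A[OF 2(1)] by (simp add: closure_of_complement openin_diff)
    qed simp
  qed
  have "X closure_of \<Inter>\<G> = topspace X"
    by (rule Baire_category[OF disjI1[OF X] cG G])
  moreover have "gdelta_in X (\<Inter>\<G>)"
    unfolding gdelta_in_alt
  proof
    show "\<Inter>\<G> \<subseteq> topspace X" unfolding \<G>_def by auto
    show "(countable intersection_of openin X) (\<Inter>\<G>)"
      unfolding intersection_of_def using cG G by blast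
  qed
  ultimately show ?thesis unfolding dense_gdelta_def eq by simp
qed

section \<open>The classes U2, U3, U4, U5\<close>

lemma exists_rational_disc:
  fixes c d x0 r :: real
  assumes "c < d" "x0 \<in> {c..d}" "r > 0"
  obtains q \<rho> where "q \<in> \<rat>" "\<rho> \<in> \<rat>" "0 < \<rho>" "c \<le> q - \<rho>" "q + \<rho> \<le> d"
    "\<bar>q - x0\<bar> < r / 4" "\<rho> < r / 4"
proof -
  have "max c (x0 - r / 4) < min d (x0 + r / 4)" using assms by auto
  then obtain q where q: "q \<in> \<rat>" "max c (x0 - r / 4) < q" "q < min d (x0 + r / 4)"
    using Rats_dense_in_real by blast
  have "0 < min (r / 4) (min (q - c) (d - q))" using q assms by auto
  then obtain \<rho> where \<rho>: "\<rho> \<in> \<rat>" "0 < \<rho>" "\<rho> < min (r / 4) (min (q - c) (d - q))"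
    using Rats_dense_in_real by blast
  have "\<bar>q - x0\<bar> < r / 4" by (rule abs_less_iff[THEN iffD2]) (use q in auto)
  then show ?thesis by (intro that[of q \<rho>]) (use q \<rho> in auto)
qed

lemma norm_diff_of_real_le: "cmod (z - of_real x0) \<le> cmod (z - of_real q) + \<bar>q - x0\<bar>"
proof -
  have "cmod (z - of_real x0) \<le> cmod (z - of_real q) + cmod (of_real q - (of_real x0 :: complex))"
    by (metis diff_add_cancel norm_triangle_ineq add_diff_eq)
  then show ?thesis by (metis norm_of_real of_real_diff)
qed

lemma real_bound_on_compact:
  fixes g :: "complex \<Rightarrow> complex"
  assumes "compact K" "continuous_on K g"
  obtains M :: nat where "\<And>z. z \<in> K \<Longrightarrow> cmod (g z) \<le> real M"
proof -
  obtain B where "\<And>z. z \<in> K \<Longrightarrow> cmod (g z) \<le> B"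
    using compact_imp_bounded[OF compact_continuous_image[OF assms(2,1)]] unfolding bounded_iff by auto
  then show ?thesis using real_nat_ceiling_ge[of B] that by (meson order_trans)
qed

lemma half_cball_subset_Lc_upper_half_disc:
  fixes c d q \<rho> x0 r :: real
  assumes "c \<le> q - \<rho>" "q + \<rho> \<le> d" "\<bar>q - x0\<bar> + \<rho> < r"
  shows "cball (of_real q) \<rho> \<inter> {z. 0 \<le> Im z} \<subseteq> Lc c d \<union> upper_half_disc (of_real x0) r"
proof
  fix y assume y: "y \<in> cball (of_real q) \<rho> \<inter> {z. 0 \<le> Im z}"
  then have yq: "cmod (y - of_real q) \<le> \<rho>" by (simp add: dist_norm norm_minus_commute)
  show "y \<in> Lc c d \<union> upper_half_disc (of_real x0) r"
  proof (cases "Im y = 0")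
    case True
    then have "y = of_real (Re y)" by (simp add: complex_eq_iff)
    moreover have "\<bar>Re y - q\<bar> \<le> \<rho>"
      using yq abs_Re_le_cmod[of "y - of_real q"] by simp
    then have "Re y \<in> {c..d}" using assms by (auto simp: abs_le_iff)
    ultimately show ?thesis unfolding Lc_def by blast
  next
    case False
    moreover have "cmod (y - of_real x0) < r"
      using norm_diff_of_real_le[of y x0 q] yq assms(3) by linarith
    ultimately show ?thesis using y
      unfolding upper_half_disc_def by (auto simp: dist_norm norm_minus_commute)
  qed
qed

lemma half_cball_subset_upper_half_disc_diameter:
  assumes "\<rho> > 0"
  shows "cball (of_real q) (\<rho> / 2) \<inter> {z. 0 \<le> Im z} \<subseteq>
    upper_half_disc (of_real q) \<rho> \<union> of_real ` {q - \<rho><..<q + \<rho>}"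
proof
  fix y assume y: "y \<in> cball (of_real q) (\<rho> / 2) \<inter> {z. 0 \<le> Im z}"
  then have yq: "cmod (y - of_real q) \<le> \<rho> / 2" by (simp add: dist_norm norm_minus_commute)
  show "y \<in> upper_half_disc (of_real q) \<rho> \<union> of_real ` {q - \<rho><..<q + \<rho>}"
  proof (cases "Im y = 0")
    case True
    then have "y = of_real (Re y)" by (simp add: complex_eq_iff)
    moreover have "\<bar>Re y - q\<bar> \<le> \<rho> / 2"
      using yq abs_Re_le_cmod[of "y - of_real q"] by simp
    then have "q - \<rho> < Re y \<and> Re y < q + \<rho>" using assms by linarith
    then have "Re y \<in> {q - \<rho><..<q + \<rho>}" by simp
    ultimately show ?thesis by blast
  next
    case False
    then show ?thesis using y yq assms
      unfolding upper_half_disc_def by (auto simp: dist_norm norm_minus_commute)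
  qed
qed

lemma closed_Lc: "closed (Lc c d)"
  unfolding Lc_def by (intro compact_imp_closed compact_continuous_image continuous_intros) auto

lemma has_field_derivative_inverse_power:
  assumes "z \<noteq> w"
  shows "((\<lambda>z. (-1) ^ j * fact j * inverse (z - w) ^ Suc j) has_field_derivative
    (-1) ^ Suc j * fact (Suc j) * inverse (z - w) ^ Suc (Suc j)) (at z)"
proof -
  have "((\<lambda>z. inverse (z - w)) has_field_derivative - (inverse (z - w) * inverse (z - w))) (at z)"
    using assms by (auto intro!: derivative_eq_intros simp: power2_eq_square)
  from DERIV_cmult[OF DERIV_power[OF this], of "(-1) ^ j * fact j" "Suc j"]
  show ?thesis by (simp add: algebra_simps)
qed

lemma
  assumes "Im z0 = 0"
  shows cnj_upper_half_disc: "cnj ` upper_half_disc z0 r = lower_half_disc z0 r"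
    and cnj_lower_half_disc: "cnj ` lower_half_disc z0 r = upper_half_disc z0 r"
proof -
  have "cnj z0 = z0" using assms by (simp add: complex_eq_iff)
  then have "dist z0 (cnj z) = dist z0 z" for z
    by (metis complex_cnj_diff complex_mod_cnj dist_norm)
  then show "cnj ` upper_half_disc z0 r = lower_half_disc z0 r" "cnj ` lower_half_disc z0 r = upper_half_disc z0 r"
    unfolding image_cnj_conv_vimage_cnj by (auto simp: upper_half_disc_def lower_half_disc_def)
qed

lemma cnj_Lc: "cnj ` Lc c d = Lc c d"
  unfolding Lc_def by force

lemma reflected_extension:
  fixes g :: "complex \<Rightarrow> complex"
  assumes "Im z0 = 0" "open A"
    and cont: "continuous_on (Lc c d \<union> cnj ` A) g" and hol: "g holomorphic_on cnj ` A"
    and eq: "\<forall>x\<in>{c..d}. of_real x \<in> ball z0 r \<longrightarrow> g (of_real x) = u x"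
  shows "continuous_on (Lc c d \<union> A) (cnj \<circ> g \<circ> cnj)" "(cnj \<circ> g \<circ> cnj) holomorphic_on A"
    "\<forall>x\<in>{c..d}. of_real x \<in> ball z0 r \<longrightarrow> (cnj \<circ> g \<circ> cnj) (of_real x) = cnj (u x)"
proof -
  have "continuous_on (Lc c d \<union> A) (\<lambda>z. g (cnj z))"
    by (rule continuous_on_compose2[OF cont continuous_on_cnj[OF continuous_on_id]])
      (use cnj_Lc in blast)
  then show "continuous_on (Lc c d \<union> A) (cnj \<circ> g \<circ> cnj)"
    unfolding o_def by (rule continuous_on_cnj)
  show "(cnj \<circ> g \<circ> cnj) holomorphic_on A"
    by (rule holomorphic_on_compose_cnj_cnj[OF hol \<open>open A\<close>])
  show "\<forall>x\<in>{c..d}. of_real x \<in> ball z0 r \<longrightarrow> (cnj \<circ> g \<circ> cnj) (of_real x) = cnj (u x)"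
    using eq by simp
qed

context Ck_space
begin

definition upper_extendable :: "real \<Rightarrow> real \<Rightarrow> nat \<Rightarrow> (real \<Rightarrow> complex) set" where
  "upper_extendable q \<rho> M = {u \<in> Ck c d k. \<exists>g. g holomorphic_on upper_half_disc (of_real q) \<rho> \<and>
     continuous_on (upper_half_disc (of_real q) \<rho> \<union> of_real ` {q - \<rho><..<q + \<rho>}) g \<and>
     (\<forall>z\<in>upper_half_disc (of_real q) \<rho>. cmod (g z) \<le> real M) \<and>
     (\<forall>x\<in>{q - \<rho><..<q + \<rho>}. g (of_real x) = u x)}"

definition disc_extendable :: "real \<Rightarrow> real \<Rightarrow> nat \<Rightarrow> (real \<Rightarrow> complex) set" where
  "disc_extendable q \<rho> M = {u \<in> Ck c d k. \<exists>g. g holomorphic_on ball (of_real q) \<rho> \<and>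
     (\<forall>z\<in>ball (of_real q) \<rho>. cmod (g z) \<le> real M) \<and> (\<forall>x\<in>{q - \<rho><..<q + \<rho>}. g (of_real x) = u x)}"

definition rational_discs :: "(real \<times> real \<times> nat) set" where
  "rational_discs = {(q, \<rho>, M). q \<in> \<rat> \<and> \<rho> \<in> \<rat> \<and> 0 < \<rho> \<and> c \<le> q - \<rho> \<and> q + \<rho> \<le> d}"

lemma countable_rational_discs: "countable rational_discs"
proof (rule countable_subset)
  show "rational_discs \<subseteq> \<rat> \<times> \<rat> \<times> (UNIV :: nat set)" unfolding rational_discs_def by auto
qed (intro countable_SIGMA countable_rat countableI_type)

lemma upper_extendable_of_not_U2:
  assumes u: "u \<in> Ck c d k" and "u \<notin> U2 c d k"
  shows "\<exists>(q, \<rho>, M)\<in>rational_discs. u \<in> upper_extendable q \<rho> M"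
proof -
  obtain z0 r g where "z0 \<in> Lc c d" and r: "r > 0"
    and cont: "continuous_on (Lc c d \<union> upper_half_disc z0 r) g"
    and hol: "g holomorphic_on upper_half_disc z0 r"
    and eq: "\<forall>x\<in>{c..d}. complex_of_real x \<in> ball z0 r \<longrightarrow> g (complex_of_real x) = u x"
    using assms unfolding U2_def by blast
  then obtain x0 where x0: "x0 \<in> {c..d}" "z0 = of_real x0" unfolding Lc_def by auto
  obtain q \<rho> where q\<rho>: "q \<in> \<rat>" "\<rho> \<in> \<rat>" "0 < \<rho>" "c \<le> q - \<rho>" "q + \<rho> \<le> d"
    "\<bar>q - x0\<bar> < r / 4" "\<rho> < r / 4"
    using exists_rational_disc[OF less x0(1) r] by blast
  define K where "K = cball (of_real q :: complex) \<rho> \<inter> {z. 0 \<le> Im z}"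
  have K: "K \<subseteq> Lc c d \<union> upper_half_disc z0 r"
    unfolding K_def x0(2) using q\<rho> by (intro half_cball_subset_Lc_upper_half_disc) auto
  have "compact K" unfolding K_def by (intro compact_Int_closed compact_cball closed_halfspace_Im_ge)
  then obtain M where M: "\<And>z. z \<in> K \<Longrightarrow> cmod (g z) \<le> real M"
    using real_bound_on_compact continuous_on_subset[OF cont K] by blast
  have upper_K: "upper_half_disc (of_real q) \<rho> \<subseteq> K" unfolding upper_half_disc_def K_def by auto
  have diameter_K: "of_real ` {q - \<rho><..<q + \<rho>} \<subseteq> K"
    unfolding K_def by (auto simp: dist_real_def)
  have upper_sub: "upper_half_disc (of_real q) \<rho> \<subseteq> upper_half_disc z0 r"
  proof
    fix z assume z: "z \<in> upper_half_disc (of_real q) \<rho>"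
    then have "z \<in> Lc c d \<union> upper_half_disc z0 r" using upper_K K by blast
    moreover have "z \<notin> Lc c d" using z by (auto simp: Lc_def upper_half_disc_def)
    ultimately show "z \<in> upper_half_disc z0 r" by blast
  qed
  have "u \<in> upper_extendable q \<rho> M"
    unfolding upper_extendable_def
  proof (intro CollectI conjI exI[of _ g] ballI u)
    show "g holomorphic_on upper_half_disc (of_real q) \<rho>"
      by (rule holomorphic_on_subset[OF hol upper_sub])
    show "continuous_on (upper_half_disc (of_real q) \<rho> \<union> of_real ` {q - \<rho><..<q + \<rho>}) g"
      by (rule continuous_on_subset[OF cont]) (use K upper_K diameter_K in blast)
    show "cmod (g z) \<le> real M" if "z \<in> upper_half_disc (of_real q) \<rho>" for z
      using M upper_K that by blast
    fix x assume x: "x \<in> {q - \<rho><..<q + \<rho>}"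
    then have "q - \<rho> < x" "x < q + \<rho>" by auto
    then have "x \<in> {c..d}" "\<bar>x - x0\<bar> < r" using q\<rho> by (auto, linarith)
    then show "g (of_real x) = u x"
      using eq x0(2) of_real_mem_ball_iff[of x x0 r] by auto
  qed
  moreover have "(q, \<rho>, M) \<in> rational_discs" unfolding rational_discs_def using q\<rho> by auto
  ultimately show ?thesis by blast
qed

lemma not_U2_of_upper_extendable:
  assumes "(q, \<rho>, M) \<in> rational_discs" and "u \<in> upper_extendable q \<rho> M"
  shows "u \<notin> U2 c d k"
proof -
  have \<rho>: "0 < \<rho>" "c \<le> q - \<rho>" "q + \<rho> \<le> d" using assms(1) unfolding rational_discs_def by auto
  obtain g where u: "u \<in> Ck c d k" and hol: "g holomorphic_on upper_half_disc (of_real q) \<rho>"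
    and cont: "continuous_on (upper_half_disc (of_real q) \<rho> \<union> of_real ` {q - \<rho><..<q + \<rho>}) g"
    and eq: "\<And>x. x \<in> {q - \<rho><..<q + \<rho>} \<Longrightarrow> g (of_real x) = u x"
    using assms(2) unfolding upper_extendable_def by blast
  \<comment> \<open>g glued with u on all of L; on the smaller half disc only points of the open
    diameter are approached, where g and u agree\<close>
  define g' where "g' z = (if 0 < Im z then g z else u (Re z))" for z
  define K where "K = cball (of_real q :: complex) (\<rho> / 2) \<inter> {z. 0 \<le> Im z}"
  have K: "K \<subseteq> upper_half_disc (of_real q) \<rho> \<union> of_real ` {q - \<rho><..<q + \<rho>}"
    unfolding K_def by (rule half_cball_subset_upper_half_disc_diameter[OF \<rho>(1)])
  have "continuous_on K g'"
  proof (rule continuous_on_eq[OF continuous_on_subset[OF cont K]])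
    fix y assume y: "y \<in> K"
    show "g y = g' y"
    proof (cases "0 < Im y")
      case False
      then have "y = of_real (Re y)" using y unfolding K_def by (simp add: complex_eq_iff)
      moreover have "y \<notin> upper_half_disc (of_real q) \<rho>" using False by (simp add: upper_half_disc_def)
      then have "Re y \<in> {q - \<rho><..<q + \<rho>}" using K y by auto
      ultimately show ?thesis unfolding g'_def using False eq by metis
    qed (simp add: g'_def)
  qed
  moreover have "continuous_on (Lc c d) g'"
    by (rule continuous_on_eq[OF continuous_on_compose2[OF continuous_on_Ck[OF u]
          continuous_on_Re[OF continuous_on_id]]]) (auto simp: g'_def Lc_def)
  moreover have "closed K" unfolding K_def by (intro closed_Int closed_cball closed_halfspace_Im_ge)
  ultimately have "continuous_on (Lc c d \<union> K) g'"
    by (intro continuous_on_closed_Un closed_Lc)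
  then have "continuous_on (Lc c d \<union> upper_half_disc (of_real q) (\<rho> / 2)) g'"
    by (rule continuous_on_subset) (auto simp: K_def upper_half_disc_def)
  moreover have "g' holomorphic_on upper_half_disc (of_real q) (\<rho> / 2)"
    by (rule holomorphic_transform[OF holomorphic_on_subset[OF hol]])
      (use \<rho> in \<open>auto simp: upper_half_disc_def g'_def\<close>)
  moreover have "of_real q \<in> Lc c d" unfolding Lc_def using \<rho> by auto
  ultimately show ?thesis
    unfolding U2_def using \<rho>(1)
    by (auto intro!: exI[of _ "of_real q"] exI[of _ "\<rho> / 2"] exI[of _ g'] simp: g'_def)
qed

lemma U2_eq: "U2 c d k = Ck c d k - (\<Union>(q, \<rho>, M)\<in>rational_discs. upper_extendable q \<rho> M)"
  using upper_extendable_of_not_U2 not_U2_of_upper_extendable unfolding U2_def by blast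

lemma disc_extendable_of_not_U5:
  assumes u: "u \<in> Ck c d k" and "u \<notin> U5 c d k"
  shows "\<exists>(q, \<rho>, M)\<in>rational_discs. u \<in> disc_extendable q \<rho> M"
proof -
  obtain z0 r g where "z0 \<in> Lc c d" and r: "r > 0" and hol: "g holomorphic_on ball z0 r"
    and eq: "\<forall>x\<in>{c..d}. complex_of_real x \<in> ball z0 r \<longrightarrow> g (complex_of_real x) = u x"
    using assms unfolding U5_def by blast
  then obtain x0 where x0: "x0 \<in> {c..d}" "z0 = of_real x0" unfolding Lc_def by auto
  obtain q \<rho> where q\<rho>: "q \<in> \<rat>" "\<rho> \<in> \<rat>" "0 < \<rho>" "c \<le> q - \<rho>" "q + \<rho> \<le> d"
    "\<bar>q - x0\<bar> < r / 4" "\<rho> < r / 4"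
    using exists_rational_disc[OF less x0(1) r] by blast
  have K: "cball (of_real q :: complex) \<rho> \<subseteq> ball z0 r"
  proof
    fix y :: complex assume "y \<in> cball (of_real q) \<rho>"
    then have "cmod (y - of_real q) \<le> \<rho>" by (simp add: dist_norm norm_minus_commute)
    then have "cmod (y - of_real x0) < r" using norm_diff_of_real_le[of y x0 q] q\<rho> by linarith
    then show "y \<in> ball z0 r" using x0(2) by (simp add: dist_norm norm_minus_commute)
  qed
  obtain M where M: "\<And>z. z \<in> cball (of_real q) \<rho> \<Longrightarrow> cmod (g z) \<le> real M"
    using real_bound_on_compact[OF compact_cball continuous_on_subset[OF holomorphic_on_imp_continuous_on[OF hol] K]]
    by blast
  have "u \<in> disc_extendable q \<rho> M"
    unfolding disc_extendable_def
  proof (intro CollectI conjI exI[of _ g] ballI u)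
    show "g holomorphic_on ball (of_real q) \<rho>"
      by (rule holomorphic_on_subset[OF hol]) (use K in auto)
    show "cmod (g z) \<le> real M" if "z \<in> ball (of_real q) \<rho>" for z
      using M that by auto
    fix x assume x: "x \<in> {q - \<rho><..<q + \<rho>}"
    then have "q - \<rho> < x" "x < q + \<rho>" by auto
    then have "x \<in> {c..d}" "\<bar>x - x0\<bar> < r" using q\<rho> by (auto, linarith)
    then show "g (of_real x) = u x"
      using eq x0(2) of_real_mem_ball_iff[of x x0 r] by auto
  qed
  moreover have "(q, \<rho>, M) \<in> rational_discs" unfolding rational_discs_def using q\<rho> by auto
  ultimately show ?thesis by blast
qed

lemma not_U5_of_disc_extendable:
  assumes "(q, \<rho>, M) \<in> rational_discs" and "u \<in> disc_extendable q \<rho> M"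
  shows "u \<notin> U5 c d k"
proof -
  have \<rho>: "0 < \<rho>" "c \<le> q - \<rho>" "q + \<rho> \<le> d" using assms(1) unfolding rational_discs_def by auto
  obtain g where hol: "g holomorphic_on ball (of_real q) \<rho>"
    and eq: "\<And>x. x \<in> {q - \<rho><..<q + \<rho>} \<Longrightarrow> g (of_real x) = u x"
    using assms(2) unfolding disc_extendable_def by blast
  have "\<forall>x\<in>{c..d}. complex_of_real x \<in> ball (of_real q) \<rho> \<longrightarrow> g (complex_of_real x) = u x"
    using eq of_real_mem_ball_iff by (auto simp: abs_less_iff)
  moreover have "of_real q \<in> Lc c d" unfolding Lc_def using \<rho> by auto
  ultimately show ?thesis
    unfolding U5_def using hol \<rho>(1) by blast
qed

lemma U5_eq: "U5 c d k = Ck c d k - (\<Union>(q, \<rho>, M)\<in>rational_discs. disc_extendable q \<rho> M)"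
  using disc_extendable_of_not_U5 not_U5_of_disc_extendable unfolding U5_def by blast

lemma closedin_upper_extendable:
  assumes "(q, \<rho>, M) \<in> rational_discs"
  shows "closedin (Ck_topology c d k) (upper_extendable q \<rho> M)"
  unfolding Ck_topology_eq Ck_metric.metric_closedin_iff_sequentially_closed
proof (intro conjI allI impI)
  show "upper_extendable q \<rho> M \<subseteq> Ck c d k" unfolding upper_extendable_def by auto
  fix \<sigma> u assume \<sigma>: "range \<sigma> \<subseteq> upper_extendable q \<rho> M \<and> limitin Ck_metric.mtopology \<sigma> u sequentially"
  have "\<forall>n. \<exists>g. g holomorphic_on upper_half_disc (of_real q) \<rho> \<and>
     continuous_on (upper_half_disc (of_real q) \<rho> \<union> of_real ` {q - \<rho><..<q + \<rho>}) g \<and>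
     (\<forall>z\<in>upper_half_disc (of_real q) \<rho>. cmod (g z) \<le> real M) \<and>
     (\<forall>x\<in>{q - \<rho><..<q + \<rho>}. g (of_real x) = \<sigma> n x)"
    using \<sigma> unfolding upper_extendable_def by blast
  then obtain g where g: "\<And>n. g n holomorphic_on upper_half_disc (of_real q) \<rho>"
    "\<And>n. continuous_on (upper_half_disc (of_real q) \<rho> \<union> of_real ` {q - \<rho><..<q + \<rho>}) (g n)"
    "\<And>n z. z \<in> upper_half_disc (of_real q) \<rho> \<Longrightarrow> cmod (g n z) \<le> real M"
    "\<And>n x. x \<in> {q - \<rho><..<q + \<rho>} \<Longrightarrow> g n (of_real x) = \<sigma> n x"
    by metis
  have "{q - \<rho><..<q + \<rho>} \<subseteq> {c..d}" using assms unfolding rational_discs_def by auto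
  then have "uniform_limit {q - \<rho><..<q + \<rho>} \<sigma> u sequentially"
    by (rule uniform_limit_on_subset[OF uniform_limit_of_Ck_limit[OF conjunct2[OF \<sigma>]]])
  then have "uniform_limit {q - \<rho><..<q + \<rho>} (\<lambda>n x. g n (of_real x)) u sequentially"
    by (rule uniform_limit_cong'[THEN iffD1, rotated -1]) (simp_all add: g(4))
  then obtain G where "G holomorphic_on upper_half_disc (of_real q) \<rho>"
    "continuous_on (upper_half_disc (of_real q) \<rho> \<union> of_real ` {q - \<rho><..<q + \<rho>}) G"
    "\<forall>z\<in>upper_half_disc (of_real q) \<rho>. cmod (G z) \<le> real M" "\<forall>x\<in>{q - \<rho><..<q + \<rho>}. G (of_real x) = u x"
    using bounded_upper_extension_limit[where g = g and M = "real M", OF g(1-3)] by blast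
  moreover have "u \<in> Ck c d k"
    using \<sigma> Ck_metric.limitin_mspace by blast
  ultimately show "u \<in> upper_extendable q \<rho> M"
    unfolding upper_extendable_def by blast
qed

lemma closedin_disc_extendable:
  assumes "(q, \<rho>, M) \<in> rational_discs"
  shows "closedin (Ck_topology c d k) (disc_extendable q \<rho> M)"
  unfolding Ck_topology_eq Ck_metric.metric_closedin_iff_sequentially_closed
proof (intro conjI allI impI)
  show "disc_extendable q \<rho> M \<subseteq> Ck c d k" unfolding disc_extendable_def by auto
  fix \<sigma> u assume \<sigma>: "range \<sigma> \<subseteq> disc_extendable q \<rho> M \<and> limitin Ck_metric.mtopology \<sigma> u sequentially"
  have "\<forall>n. \<exists>g. g holomorphic_on ball (of_real q) \<rho> \<and> (\<forall>z\<in>ball (of_real q) \<rho>. cmod (g z) \<le> real M) \<and>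
     (\<forall>x\<in>{q - \<rho><..<q + \<rho>}. g (of_real x) = \<sigma> n x)"
    using \<sigma> unfolding disc_extendable_def by blast
  then obtain g where g: "\<And>n. g n holomorphic_on ball (of_real q) \<rho>"
    "\<And>n z. z \<in> ball (of_real q) \<rho> \<Longrightarrow> cmod (g n z) \<le> real M"
    "\<And>n x. x \<in> {q - \<rho><..<q + \<rho>} \<Longrightarrow> g n (of_real x) = \<sigma> n x"
    by metis
  have "(\<lambda>n. g n (of_real x)) \<longlonglongrightarrow> u x" if "x \<in> {q - \<rho><..<q + \<rho>}" for x
  proof -
    have "x \<in> {c..d}" using that assms unfolding rational_discs_def by auto
    then show ?thesis
      using tendsto_uniform_limitI[OF uniform_limit_of_Ck_limit[OF conjunct2[OF \<sigma>]]] g(3)[OF that] by simp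
  qed
  then obtain G where "G holomorphic_on ball (of_real q) \<rho>" "\<forall>z\<in>ball (of_real q) \<rho>. cmod (G z) \<le> real M"
    "\<forall>x\<in>{q - \<rho><..<q + \<rho>}. G (of_real x) = u x"
    using bounded_disc_extension_limit[where g = g and M = "real M", OF g(1,2)] by blast
  moreover have "u \<in> Ck c d k"
    using \<sigma> Ck_metric.limitin_mspace by blast
  ultimately show "u \<in> disc_extendable q \<rho> M"
    unfolding disc_extendable_def by blast
qed

lemma disc_extendable_subset_upper_extendable: "disc_extendable q \<rho> M \<subseteq> upper_extendable q \<rho> M"
proof
  fix u assume "u \<in> disc_extendable q \<rho> M"
  then obtain g where u: "u \<in> Ck c d k" and g: "g holomorphic_on ball (of_real q) \<rho>"
    "\<forall>z\<in>ball (of_real q) \<rho>. cmod (g z) \<le> real M" "\<forall>x\<in>{q - \<rho><..<q + \<rho>}. g (of_real x) = u x"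
    unfolding disc_extendable_def by blast
  have sub: "upper_half_disc (of_real q) \<rho> \<union> of_real ` {q - \<rho><..<q + \<rho>} \<subseteq> ball (of_real q) \<rho>"
    by (auto simp: upper_half_disc_def dist_real_def abs_less_iff)
  show "u \<in> upper_extendable q \<rho> M"
    unfolding upper_extendable_def using u g sub
    by (auto intro!: exI[of _ g] holomorphic_on_subset[OF g(1)]
        continuous_on_subset[OF holomorphic_on_imp_continuous_on[OF g(1)]])
qed

lemma pole_in_Ck:
  assumes "Im w \<noteq> 0"
  shows "(\<lambda>x. if x \<in> {c..d} then 1 / (of_real x - w) else 0) \<in> Ck c d k"
proof -
  define D where "D j x = (if j = 0 \<and> x \<notin> {c..d} then 0 else (-1) ^ j * fact j * inverse (of_real x - w) ^ Suc j)"
    for j x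
  have w: "of_real x \<noteq> w" for x using assms by auto
  have "has_derivs c d k D"
    unfolding has_derivs_def
  proof (intro conjI allI impI)
    fix j x assume "x \<in> {c..d}"
    have "((\<lambda>x. (-1) ^ j * fact j * inverse (of_real x - w) ^ Suc j) has_vector_derivative
        (-1) ^ Suc j * fact (Suc j) * inverse (of_real x - w) ^ Suc (Suc j)) (at x within {c..d})"
      by (rule has_vector_derivative_real_field[OF has_field_derivative_inverse_power[OF w]])
    then have "(D j has_vector_derivative
        (-1) ^ Suc j * fact (Suc j) * inverse (of_real x - w) ^ Suc (Suc j)) (at x within {c..d})"
      by (rule has_vector_derivative_transform[OF \<open>x \<in> {c..d}\<close>, rotated]) (simp add: D_def)
    then show "(D j has_vector_derivative D (Suc j) x) (at x within {c..d})"
      by (simp add: D_def)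
  next
    fix j
    have "continuous_on {c..d} (\<lambda>x. (-1) ^ j * fact j * inverse (of_real x - w) ^ Suc j)"
      using w by (intro continuous_intros) auto
    then show "continuous_on {c..d} (D j)" by (rule continuous_on_eq) (auto simp: D_def)
  qed
  moreover have "D 0 = (\<lambda>x. if x \<in> {c..d} then 1 / (of_real x - w) else 0)"
    by (auto simp: D_def divide_inverse)
  ultimately show ?thesis unfolding Ck_def by auto
qed

lemma interior_upper_extendable:
  assumes "(q, \<rho>, M) \<in> rational_discs"
  shows "Ck_topology c d k interior_of upper_extendable q \<rho> M = {}"
proof (rule ccontr)
  assume "Ck_topology c d k interior_of upper_extendable q \<rho> M \<noteq> {}"
  then obtain u where u_int: "u \<in> Ck_metric.mtopology interior_of upper_extendable q \<rho> M"
    unfolding Ck_topology_eq by blast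
  have "openin Ck_metric.mtopology (Ck_metric.mtopology interior_of upper_extendable q \<rho> M)"
    by simp
  then obtain r where "r > 0" "Ck_metric.mball u r \<subseteq> Ck_metric.mtopology interior_of upper_extendable q \<rho> M"
    using u_int unfolding Ck_metric.openin_mtopology by blast
  then have r: "r > 0" "Ck_metric.mball u r \<subseteq> upper_extendable q \<rho> M"
    using interior_of_subset[of Ck_metric.mtopology "upper_extendable q \<rho> M"] by auto
  have uA: "u \<in> upper_extendable q \<rho> M"
    using u_int interior_of_subset[of Ck_metric.mtopology "upper_extendable q \<rho> M"] by blast
  then have u: "u \<in> Ck c d k" unfolding upper_extendable_def by blast
  have \<rho>: "0 < \<rho>" "{q - \<rho><..<q + \<rho>} \<subseteq> {c..d}" using assms unfolding rational_discs_def by auto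
  \<comment> \<open>a small multiple of a pole inside the half disc added to u stays in the set\<close>
  define w where "w = of_real q + \<i> * of_real (\<rho> / 2)"
  define f where "f x = (if x \<in> {c..d} then 1 / (of_real x - w) else 0)" for x
  have "Im w \<noteq> 0" using \<rho> by (simp add: w_def)
  then obtain t where t: "t > 0" "Ck_dist u (\<lambda>x. u x + of_real t * f x) < r"
    using Ck_dist_add_small[OF u pole_in_Ck r(1)] unfolding f_def by blast
  then have "(\<lambda>x. u x + of_real t * f x) \<in> upper_extendable q \<rho> M"
    using r(2) u Ck_lincomb[OF u pole_in_Ck[OF \<open>Im w \<noteq> 0\<close>], of 1 "of_real t"] by (auto simp: f_def)
  then obtain g2 where g2: "g2 holomorphic_on upper_half_disc (of_real q) \<rho>"
    "continuous_on (upper_half_disc (of_real q) \<rho> \<union> of_real ` {q - \<rho><..<q + \<rho>}) g2"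
    "\<And>z. z \<in> upper_half_disc (of_real q) \<rho> \<Longrightarrow> cmod (g2 z) \<le> real M"
    "\<And>x. x \<in> {q - \<rho><..<q + \<rho>} \<Longrightarrow> g2 (of_real x) = u x + of_real t * f x"
    unfolding upper_extendable_def by blast
  obtain g1 where g1: "g1 holomorphic_on upper_half_disc (of_real q) \<rho>"
    "continuous_on (upper_half_disc (of_real q) \<rho> \<union> of_real ` {q - \<rho><..<q + \<rho>}) g1"
    "\<And>z. z \<in> upper_half_disc (of_real q) \<rho> \<Longrightarrow> cmod (g1 z) \<le> real M"
    "\<And>x. x \<in> {q - \<rho><..<q + \<rho>} \<Longrightarrow> g1 (of_real x) = u x"
    using uA unfolding upper_extendable_def by blast
  show False
  proof (rule no_bounded_upper_extension_of_pole[OF \<rho>(1), where G = "\<lambda>z. (g2 z - g1 z) / of_real t"])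
    show "(\<lambda>z. (g2 z - g1 z) / of_real t) holomorphic_on upper_half_disc (of_real q) \<rho>"
      using t by (intro holomorphic_intros g1(1) g2(1)) auto
    show "continuous_on (upper_half_disc (of_real q) \<rho> \<union> of_real ` {q - \<rho><..<q + \<rho>})
        (\<lambda>z. (g2 z - g1 z) / of_real t)"
      using t by (intro continuous_intros g1(2) g2(2)) auto
    show "cmod ((g2 z - g1 z) / of_real t) \<le> 2 * real M / t" if "z \<in> upper_half_disc (of_real q) \<rho>" for z
      using g1(3)[OF that] g2(3)[OF that] norm_triangle_ineq4[of "g2 z" "g1 z"] t
      by (simp add: norm_divide divide_right_mono)
    show "(g2 (of_real x) - g1 (of_real x)) / of_real t = 1 / (of_real x - (of_real q + \<i> * of_real (\<rho> / 2)))"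
      if "x \<in> {q - \<rho><..<q + \<rho>}" for x
      using g1(4)[OF that] g2(4)[OF that] t \<rho>(2) that by (auto simp: f_def w_def)
  qed
qed

lemma not_U3_iff:
  assumes u: "u \<in> Ck c d k"
  shows "u \<notin> U3 c d k \<longleftrightarrow> cnj \<circ> u \<notin> U2 c d k"
proof
  assume "u \<notin> U3 c d k"
  then obtain z0 r g where z0: "z0 \<in> Lc c d" "r > 0"
    and g: "continuous_on (Lc c d \<union> lower_half_disc z0 r) g" "g holomorphic_on lower_half_disc z0 r"
      "\<forall>x\<in>{c..d}. of_real x \<in> ball z0 r \<longrightarrow> g (of_real x) = u x"
    using u unfolding U3_def by blast
  have "Im z0 = 0" using z0 by (auto simp: Lc_def)
  note refl = reflected_extension[OF this open_upper_half_disc[of z0 r],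
      unfolded cnj_upper_half_disc[OF \<open>Im z0 = 0\<close>], OF g]
  show "cnj \<circ> u \<notin> U2 c d k"
    unfolding U2_def using z0 refl
    by (auto intro!: exI[of _ z0] exI[of _ r] exI[of _ "cnj \<circ> g \<circ> cnj"])
next
  assume "cnj \<circ> u \<notin> U2 c d k"
  then obtain z0 r g where z0: "z0 \<in> Lc c d" "r > 0"
    and g: "continuous_on (Lc c d \<union> upper_half_disc z0 r) g" "g holomorphic_on upper_half_disc z0 r"
      "\<forall>x\<in>{c..d}. of_real x \<in> ball z0 r \<longrightarrow> g (of_real x) = (cnj \<circ> u) x"
    using Ck_cnj[OF u] unfolding U2_def by blast
  have "Im z0 = 0" using z0 by (auto simp: Lc_def)
  note refl = reflected_extension[OF this open_lower_half_disc[of z0 r],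
      unfolded cnj_lower_half_disc[OF \<open>Im z0 = 0\<close>], OF g]
  show "u \<notin> U3 c d k"
    unfolding U3_def using z0 refl
    by (auto intro!: exI[of _ z0] exI[of _ r] exI[of _ "cnj \<circ> g \<circ> cnj"])
qed

lemma U3_eq_cnj_image: "U3 c d k = (\<circ>) cnj ` U2 c d k"
proof (intro equalityI subsetI)
  fix u assume u: "u \<in> U3 c d k"
  then have "u \<in> Ck c d k" unfolding U3_def by blast
  then have "cnj \<circ> u \<in> U2 c d k" using not_U3_iff u by blast
  moreover have "u = cnj \<circ> (cnj \<circ> u)" by (simp add: fun_eq_iff)
  ultimately show "u \<in> (\<circ>) cnj ` U2 c d k" by blast
next
  fix u assume "u \<in> (\<circ>) cnj ` U2 c d k"
  then obtain v where v: "v \<in> U2 c d k" "u = cnj \<circ> v" by blast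
  then have "u \<in> Ck c d k" using Ck_cnj unfolding U2_def by blast
  moreover have "cnj \<circ> u = v" using v(2) by (simp add: fun_eq_iff)
  ultimately show "u \<in> U3 c d k" using not_U3_iff v(1) by blast
qed

lemma residual_U2: "residual_in (Ck_topology c d k) (U2 c d k)"
  unfolding residual_in_def
proof (intro exI[of _ "(\<lambda>(q, \<rho>, M). upper_extendable q \<rho> M) ` rational_discs"] conjI)
  show "countable ((\<lambda>(q, \<rho>, M). upper_extendable q \<rho> M) ` rational_discs)"
    using countable_rational_discs by simp
  show "\<forall>A\<in>(\<lambda>(q, \<rho>, M). upper_extendable q \<rho> M) ` rational_discs.
      closedin (Ck_topology c d k) A \<and> Ck_topology c d k interior_of A = {}"
    using closedin_upper_extendable interior_upper_extendable by auto
  show "U2 c d k = topspace (Ck_topology c d k) - \<Union> ((\<lambda>(q, \<rho>, M). upper_extendable q \<rho> M) ` rational_discs)"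
    unfolding U2_eq Ck_topology_eq by simp
qed

lemma residual_U5: "residual_in (Ck_topology c d k) (U5 c d k)"
  unfolding residual_in_def
proof (intro exI[of _ "(\<lambda>(q, \<rho>, M). disc_extendable q \<rho> M) ` rational_discs"] conjI)
  show "countable ((\<lambda>(q, \<rho>, M). disc_extendable q \<rho> M) ` rational_discs)"
    using countable_rational_discs by simp
  have "closedin (Ck_topology c d k) (disc_extendable q \<rho> M) \<and>
      Ck_topology c d k interior_of disc_extendable q \<rho> M = {}" if "(q, \<rho>, M) \<in> rational_discs" for q \<rho> M
    using closedin_disc_extendable[OF that] interior_upper_extendable[OF that]
      interior_of_mono[OF disc_extendable_subset_upper_extendable, of "Ck_topology c d k" q \<rho> M]
    by auto
  then show "\<forall>A\<in>(\<lambda>(q, \<rho>, M). disc_extendable q \<rho> M) ` rational_discs.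
      closedin (Ck_topology c d k) A \<and> Ck_topology c d k interior_of A = {}"
    by auto
  show "U5 c d k = topspace (Ck_topology c d k) - \<Union> ((\<lambda>(q, \<rho>, M). disc_extendable q \<rho> M) ` rational_discs)"
    unfolding U5_eq Ck_topology_eq by simp
qed

end

theorem theorem4p13:
  fixes c d :: real and k :: enat
  assumes "c < d"
  shows "dense_gdelta (Ck_topology c d k) (U2 c d k) \<and>
         dense_gdelta (Ck_topology c d k) (U3 c d k) \<and>
         dense_gdelta (Ck_topology c d k) (U4 c d k) \<and>
         dense_gdelta (Ck_topology c d k) (U5 c d k)"
proof -
  interpret Ck_space c d k by standard (rule assms)
  have U2: "residual_in (Ck_topology c d k) (U2 c d k)"
    by (rule residual_U2)
  have U3: "residual_in (Ck_topology c d k) (U3 c d k)"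
    unfolding U3_eq_cnj_image by (rule residual_in_homeomorphic_image[OF homeomorphic_map_cnj U2])
  have U4: "residual_in (Ck_topology c d k) (U4 c d k)"
    unfolding U4_def by (rule residual_in_Int[OF U2 U3])
  have U5: "residual_in (Ck_topology c d k) (U5 c d k)"
    by (rule residual_U5)
  show ?thesis
    using dense_gdelta_if_residual_in[OF completely_metrizable_Ck] U2 U3 U4 U5 by blast
qed

end
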